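(* Let $S$ be a Polish space and $\mu_0$ a diffuse probability measure on $S$. Let $\boldsymbol{\mu}$ be an exchangeable stick-breaking process (ESB) with base measure $\mu_0$ and exchangeable length variables $(\mathbf{v}_i)_{i\ge1}$ such that marginally $\mathbf{v}_i\sim\mathrm{Be}(a,b)$ for some $a,b>0$. Then $\boldsymbol{\mu}$ is proper and has full support.
   Context: A species sampling process on $S$ with diffuse base measure $\mu_0$ is a random probability measure $\boldsymbol{\mu}=\sum_{j\ge1}\mathbf{w}_j\delta_{\boldsymbol{\xi}_j}+(1-\sum_{j}\mathbf{w}_j)\mu_0$, where $\mathbf{w}_j\ge0$, $\sum_j\mathbf{w}_j\le1$ a.s., and the weights are independent of the i.i.d. atoms $\boldsymbol{\xi}_j\sim\mu_0$. It is proper if $\sum_j\mathbf{w}_j=1$ a.s. An ESB is such a process with weights $\mathbf{w}_1=\mathbf{v}_1$, $\mathbf{w}_j=\mathbf{v}_j\prod_{i<j}(1-\mathbf{v}_i)$, where $(\mathbf{v}_i)_{i\ge1}$ is an exchangeable sequence of $[0,1]$-valued random variables. $\mathrm{Be}(a,b)$ is the Beta distribution. "Full support" means the weak-topology support of the law of $\boldsymbol{\mu}$ is the set of all probability measures whose support is contained in the support of $\mu_0$. *)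

theory Defs
  imports "HOL-Probability.Probability"
begin

definition beta_density :: "real \<Rightarrow> real \<Rightarrow> real \<Rightarrow> real" where
  "beta_density a b x =
     indicator {0<..<1} x * x powr (a - 1) * (1 - x) powr (b - 1) / Beta a b"

definition exchangeable :: "'w measure \<Rightarrow> (nat \<Rightarrow> 'w \<Rightarrow> real) \<Rightarrow> bool" where
  "exchangeable M v \<longleftrightarrow>
     (\<forall>i. v i \<in> borel_measurable M) \<and>
     (\<forall>n \<pi>. \<pi> permutes {..<n} \<longrightarrow>
        distr M (PiM UNIV (\<lambda>_. borel)) (\<lambda>\<omega> i. v (\<pi> i) \<omega>)
          = distr M (PiM UNIV (\<lambda>_. borel)) (\<lambda>\<omega> i. v i \<omega>))"

text \<open>Stick-breaking weights (indices start at 0): w_0 = v_0, w_j = v_j prod_{i<j} (1 - v_i).\<close>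
definition sb_weight :: "(nat \<Rightarrow> 'w \<Rightarrow> real) \<Rightarrow> nat \<Rightarrow> 'w \<Rightarrow> real" where
  "sb_weight v j \<omega> = v j \<omega> * (\<Prod>i<j. 1 - v i \<omega>)"

definition ssp_measure :: "'a measure \<Rightarrow> (nat \<Rightarrow> real) \<Rightarrow> (nat \<Rightarrow> 'a) \<Rightarrow> 'a measure" where
  "ssp_measure \<mu>0 w \<xi> = measure_of (space \<mu>0) (sets \<mu>0)
     (\<lambda>A. (\<Sum>j. ennreal (w j) * indicator A (\<xi> j))
          + ennreal (1 - (\<Sum>j. w j)) * emeasure \<mu>0 A)"

definition msupport :: "'a::topological_space measure \<Rightarrow> 'a set" where
  "msupport \<nu> = {x. \<forall>U. open U \<longrightarrow> x \<in> U \<longrightarrow> emeasure \<nu> U > 0}"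

definition diffuse :: "'a measure \<Rightarrow> bool" where
  "diffuse \<mu> \<longleftrightarrow> (\<forall>x. emeasure \<mu> {x} = 0)"

text \<open>nu lies in the (weak-topology) support of the law of the random measure
  mu: every basic weak neighbourhood of nu, determined by finitely many bounded
  continuous functions f_0..f_{k-1} and a radius e > 0, has positive probability.\<close>
definition in_law_support ::
  "'w measure \<Rightarrow> ('w \<Rightarrow> 'a::topological_space measure) \<Rightarrow> 'a measure \<Rightarrow> bool" where
  "in_law_support M \<mu> \<nu> \<longleftrightarrow>
     (\<forall>k (f :: nat \<Rightarrow> 'a \<Rightarrow> real) (e::real).
        (\<forall>i<k. continuous_on UNIV (f i) \<and> bounded (range (f i))) \<longrightarrow> e > 0 \<longrightarrow>
        measure M {\<omega>\<in>space M. \<forall>i<k.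
            \<bar>(\<integral>x. f i x \<partial>(\<mu> \<omega>)) - (\<integral>x. f i x \<partial>\<nu>)\<bar> < e} > 0)"

text \<open>Independence of two random elements with possibly different value spaces
  (same as the library's indep_var, which requires equal value types).\<close>
definition indep_rv :: "'w measure \<Rightarrow> 'b measure \<Rightarrow> ('w \<Rightarrow> 'b) \<Rightarrow> 'c measure \<Rightarrow> ('w \<Rightarrow> 'c) \<Rightarrow> bool" where
  "indep_rv M S X T Y \<longleftrightarrow>
     X \<in> measurable M S \<and> Y \<in> measurable M T \<and>
     prob_space.indep_set M
       (sigma_sets (space M) {X -` A \<inter> space M | A. A \<in> sets S})
       (sigma_sets (space M) {Y -` A \<inter> space M | A. A \<in> sets T})"

end

theory Submission
  imports Defs
begin

text \<open>
  Properness: the unbroken part R = lim (\<Prod>i<n. 1 - v i) of the stick does not change under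
  finite permutations of the sticks, so by exchangeability the expectation of v k on the event
  R > c does not depend on k. Since \<Sum>k<n. v k \<le> - ln c on that event, this expectation is 0,
  and as Beta variables are almost surely positive, R = 0 almost surely.

  Full support: almost surely all atoms lie in the support of \<mu>0, which gives one inclusion.
  Conversely, tested against finitely many bounded continuous functions, a probability measure
  supported in the support of \<mu>0 is close to a finite discrete measure on its support. With
  positive probability the first N sticks all lie in a small interval [\<delta>/2, \<delta>] (by
  exchangeability and the Beta marginals), so that the first N weights can be grouped to match
  the discrete masses; independently, the first N atoms land near the support points with
  positive probability.
\<close>

section \<open>Species sampling measures\<close>

lemma suminf_ennreal_commute: "(\<Sum>i. \<Sum>j. f i j :: ennreal) = (\<Sum>j. \<Sum>i. f i j)"
proof -
  have "(\<Sum>i. \<Sum>j. f i j) = (\<Sum>i. \<integral>\<^sup>+j. f i j \<partial>count_space UNIV)"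
    by (simp add: nn_integral_count_space_nat)
  also have "\<dots> = \<integral>\<^sup>+j. (\<Sum>i. f i j) \<partial>count_space UNIV"
    by (rule nn_integral_suminf[symmetric]) simp
  also have "\<dots> = (\<Sum>j. \<Sum>i. f i j)"
    by (simp add: nn_integral_count_space_nat)
  finally show ?thesis .
qed

lemma sets_ssp_measure [simp, measurable_cong]: "sets (ssp_measure \<mu>0 w \<xi>) = sets \<mu>0"
  unfolding ssp_measure_def by (simp add: sets.sets_measure_of_eq)

lemma space_ssp_measure [simp]: "space (ssp_measure \<mu>0 w \<xi>) = space \<mu>0"
  unfolding ssp_measure_def by (simp add: sets.space_measure_of_eq)

lemma emeasure_ssp_measure:
  assumes "A \<in> sets \<mu>0"
  shows "emeasure (ssp_measure \<mu>0 w \<xi>) A =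
    (\<Sum>j. ennreal (w j) * indicator A (\<xi> j)) + ennreal (1 - suminf w) * emeasure \<mu>0 A"
  unfolding ssp_measure_def
proof (rule emeasure_measure_of_sigma[OF sets.sigma_algebra_axioms _ _ assms])
  show "positive (sets \<mu>0)
      (\<lambda>A. (\<Sum>j. ennreal (w j) * indicator A (\<xi> j)) + ennreal (1 - suminf w) * emeasure \<mu>0 A)"
    unfolding positive_def by simp
  show "countably_additive (sets \<mu>0)
      (\<lambda>A. (\<Sum>j. ennreal (w j) * indicator A (\<xi> j)) + ennreal (1 - suminf w) * emeasure \<mu>0 A)"
    unfolding countably_additive_def
  proof (intro allI impI)
    fix A :: "nat \<Rightarrow> _"
    assume A: "range A \<subseteq> sets \<mu>0" "disjoint_family A" "\<Union> (range A) \<in> sets \<mu>0"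
    have "(\<Sum>i. (\<Sum>j. ennreal (w j) * indicator (A i) (\<xi> j)) + ennreal (1 - suminf w) * emeasure \<mu>0 (A i))
       = (\<Sum>i. \<Sum>j. ennreal (w j) * indicator (A i) (\<xi> j)) + (\<Sum>i. ennreal (1 - suminf w) * emeasure \<mu>0 (A i))"
      by (rule suminf_add[OF summableI summableI, symmetric])
    also have "(\<Sum>i. \<Sum>j. ennreal (w j) * indicator (A i) (\<xi> j))
        = (\<Sum>j. \<Sum>i. ennreal (w j) * indicator (A i) (\<xi> j))"
      by (rule suminf_ennreal_commute)
    also have "\<dots> = (\<Sum>j. ennreal (w j) * indicator (\<Union>i. A i) (\<xi> j))"
      by (simp add: ennreal_suminf_cmult suminf_indicator[OF A(2)])
    also have "(\<Sum>i. ennreal (1 - suminf w) * emeasure \<mu>0 (A i))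
        = ennreal (1 - suminf w) * emeasure \<mu>0 (\<Union>i. A i)"
      using A by (simp add: ennreal_suminf_cmult suminf_emeasure)
    finally show "(\<Sum>i. (\<Sum>j. ennreal (w j) * indicator (A i) (\<xi> j)) + ennreal (1 - suminf w) * emeasure \<mu>0 (A i))
       = (\<Sum>j. ennreal (w j) * indicator (\<Union> (range A)) (\<xi> j)) + ennreal (1 - suminf w) * emeasure \<mu>0 (\<Union> (range A))" .
  qed
qed

lemma nn_integral_ssp_measure:
  assumes g: "g \<in> borel_measurable \<mu>0" and \<xi>: "\<And>j. \<xi> j \<in> space \<mu>0"
  shows "(\<integral>\<^sup>+x. g x \<partial>ssp_measure \<mu>0 w \<xi>) =
    (\<Sum>j. ennreal (w j) * g (\<xi> j)) + ennreal (1 - suminf w) * (\<integral>\<^sup>+x. g x \<partial>\<mu>0)"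
  using g
proof (induction rule: borel_measurable_induct)
  case (cong f g)
  have "(\<integral>\<^sup>+x. f x \<partial>ssp_measure \<mu>0 w \<xi>) = (\<integral>\<^sup>+x. g x \<partial>ssp_measure \<mu>0 w \<xi>)"
    by (rule nn_integral_cong) (simp add: cong)
  moreover have "(\<integral>\<^sup>+x. f x \<partial>\<mu>0) = (\<integral>\<^sup>+x. g x \<partial>\<mu>0)"
    by (rule nn_integral_cong) (simp add: cong)
  ultimately show ?case
    using cong \<xi> by simp
next
  case (set A)
  then show ?case by (simp add: emeasure_ssp_measure)
next
  case (mult u c)
  have "(\<integral>\<^sup>+x. c * u x \<partial>ssp_measure \<mu>0 w \<xi>) = c * (\<integral>\<^sup>+x. u x \<partial>ssp_measure \<mu>0 w \<xi>)"
    using mult by (simp add: nn_integral_cmult)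
  also have "\<dots> = c * (\<Sum>j. ennreal (w j) * u (\<xi> j)) + c * (ennreal (1 - suminf w) * (\<integral>\<^sup>+x. u x \<partial>\<mu>0))"
    using mult by (simp add: distrib_left)
  also have "c * (\<Sum>j. ennreal (w j) * u (\<xi> j)) = (\<Sum>j. ennreal (w j) * (c * u (\<xi> j)))"
    by (simp only: ennreal_suminf_cmult[symmetric] mult.left_commute)
  also have "c * (ennreal (1 - suminf w) * (\<integral>\<^sup>+x. u x \<partial>\<mu>0))
      = ennreal (1 - suminf w) * (\<integral>\<^sup>+x. c * u x \<partial>\<mu>0)"
    using mult by (simp add: nn_integral_cmult mult_ac)
  finally show ?case .
next
  case (add u v)
  have "(\<integral>\<^sup>+x. v x + u x \<partial>ssp_measure \<mu>0 w \<xi>)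
      = (\<integral>\<^sup>+x. v x \<partial>ssp_measure \<mu>0 w \<xi>) + (\<integral>\<^sup>+x. u x \<partial>ssp_measure \<mu>0 w \<xi>)"
    using add by (simp add: nn_integral_add)
  also have "\<dots> = ((\<Sum>j. ennreal (w j) * v (\<xi> j)) + (\<Sum>j. ennreal (w j) * u (\<xi> j)))
      + ennreal (1 - suminf w) * ((\<integral>\<^sup>+x. v x \<partial>\<mu>0) + (\<integral>\<^sup>+x. u x \<partial>\<mu>0))"
    using add by (simp add: distrib_left algebra_simps)
  also have "(\<Sum>j. ennreal (w j) * v (\<xi> j)) + (\<Sum>j. ennreal (w j) * u (\<xi> j))
      = (\<Sum>j. ennreal (w j) * (v (\<xi> j) + u (\<xi> j)))"
    by (simp add: suminf_add[OF summableI summableI] distrib_left)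
  also have "(\<integral>\<^sup>+x. v x \<partial>\<mu>0) + (\<integral>\<^sup>+x. u x \<partial>\<mu>0) = (\<integral>\<^sup>+x. v x + u x \<partial>\<mu>0)"
    using add by (simp add: nn_integral_add)
  finally show ?case by simp
next
  case (seq U)
  have inc: "\<And>m n x. m \<le> n \<Longrightarrow> U m x \<le> U n x"
    using \<open>incseq U\<close> by (auto simp: incseq_def le_fun_def)
  have "(\<integral>\<^sup>+x. (SUP i. U i) x \<partial>ssp_measure \<mu>0 w \<xi>) = (SUP i. \<integral>\<^sup>+x. U i x \<partial>ssp_measure \<mu>0 w \<xi>)"
    unfolding SUP_apply using seq by (intro nn_integral_monotone_convergence_SUP) auto
  also have "\<dots> = (SUP i. (\<Sum>j. ennreal (w j) * U i (\<xi> j)) + ennreal (1 - suminf w) * (\<integral>\<^sup>+x. U i x \<partial>\<mu>0))"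
    using seq by simp
  also have "\<dots> = (SUP i. \<Sum>j. ennreal (w j) * U i (\<xi> j))
      + (SUP i. ennreal (1 - suminf w) * (\<integral>\<^sup>+x. U i x \<partial>\<mu>0))"
    using inc by (intro ennreal_SUP_add)
      (auto simp: incseq_def intro!: suminf_le mult_left_mono nn_integral_mono)
  also have "(SUP i. \<Sum>j. ennreal (w j) * U i (\<xi> j)) = (\<Sum>j. ennreal (w j) * (SUP i. U i) (\<xi> j))"
  proof -
    have "(SUP i. \<Sum>j. ennreal (w j) * U i (\<xi> j))
        = (SUP i. \<integral>\<^sup>+j. ennreal (w j) * U i (\<xi> j) \<partial>count_space UNIV)"
      by (simp add: nn_integral_count_space_nat)
    also have "\<dots> = \<integral>\<^sup>+j. (SUP i. ennreal (w j) * U i (\<xi> j)) \<partial>count_space UNIV"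
      using inc by (intro nn_integral_monotone_convergence_SUP[symmetric])
        (auto simp: incseq_def le_fun_def intro!: mult_left_mono)
    finally show ?thesis
      by (simp add: nn_integral_count_space_nat SUP_mult_left_ennreal image_comp)
  qed
  also have "(SUP i. ennreal (1 - suminf w) * (\<integral>\<^sup>+x. U i x \<partial>\<mu>0))
      = ennreal (1 - suminf w) * (\<integral>\<^sup>+x. (SUP i. U i) x \<partial>\<mu>0)"
    unfolding SUP_apply using seq
    by (simp add: nn_integral_monotone_convergence_SUP SUP_mult_left_ennreal)
  finally show ?case .
qed

lemma prob_space_ssp_measure:
  assumes "prob_space \<mu>0" "\<And>j. 0 \<le> w j" "summable w" "suminf w \<le> 1" "\<And>j. \<xi> j \<in> space \<mu>0"
  shows "prob_space (ssp_measure \<mu>0 w \<xi>)"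
proof (rule prob_spaceI)
  interpret prob_space \<mu>0 by fact
  have "emeasure (ssp_measure \<mu>0 w \<xi>) (space \<mu>0) = (\<Sum>j. ennreal (w j)) + ennreal (1 - suminf w)"
    using assms(5) by (simp add: emeasure_ssp_measure emeasure_space_1)
  also have "\<dots> = 1"
    using assms by (simp add: suminf_ennreal2 ennreal_plus[symmetric] suminf_nonneg del: ennreal_plus)
  finally show "emeasure (ssp_measure \<mu>0 w \<xi>) (space (ssp_measure \<mu>0 w \<xi>)) = 1"
    by simp
qed

lemma integral_ssp_measure_nonneg:
  assumes \<mu>0: "prob_space \<mu>0" and w: "\<And>j. 0 \<le> w j" "summable w" "suminf w \<le> 1"
    and \<xi>: "\<And>j. \<xi> j \<in> space \<mu>0"
    and g: "g \<in> borel_measurable \<mu>0" "\<And>x. x \<in> space \<mu>0 \<Longrightarrow> 0 \<le> g x \<and> g x \<le> C"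
  shows "integral\<^sup>L (ssp_measure \<mu>0 w \<xi>) g = (\<Sum>j. w j * g (\<xi> j)) + (1 - suminf w) * integral\<^sup>L \<mu>0 g"
proof -
  interpret prob_space \<mu>0 by fact
  have int_g: "integrable \<mu>0 g"
    using g by (intro integrable_const_bound[where B=C]) auto
  have int_g_nonneg: "0 \<le> integral\<^sup>L \<mu>0 g"
    using g(2) by (simp add: integral_nonneg)
  have summable_wg: "summable (\<lambda>j. w j * g (\<xi> j))"
  proof (rule summable_comparison_test)
    show "\<exists>N. \<forall>n\<ge>N. norm (w n * g (\<xi> n)) \<le> C * w n"
    proof (intro exI allI impI)
      fix n :: nat
      have "w n * g (\<xi> n) \<le> w n * C"
        using g(2)[OF \<xi>[of n]] w(1)[of n] by (intro mult_left_mono) auto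
      then show "norm (w n * g (\<xi> n)) \<le> C * w n"
        using g(2)[OF \<xi>[of n]] w(1)[of n] by (simp add: mult.commute)
    qed
    show "summable (\<lambda>n. C * w n)"
      using w(2) by (rule summable_mult)
  qed
  have sum_wg_nonneg: "0 \<le> (\<Sum>j. w j * g (\<xi> j))"
    using w(1) g(2)[OF \<xi>] summable_wg by (auto intro!: suminf_nonneg)
  have "(\<integral>\<^sup>+x. ennreal (g x) \<partial>ssp_measure \<mu>0 w \<xi>) =
      (\<Sum>j. ennreal (w j) * ennreal (g (\<xi> j))) + ennreal (1 - suminf w) * (\<integral>\<^sup>+x. ennreal (g x) \<partial>\<mu>0)"
    using g \<xi> by (simp add: nn_integral_ssp_measure)
  also have "(\<Sum>j. ennreal (w j) * ennreal (g (\<xi> j))) = ennreal (\<Sum>j. w j * g (\<xi> j))"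
    using w(1) g(2)[OF \<xi>] summable_wg by (simp add: ennreal_mult[symmetric] suminf_ennreal2)
  also have "(\<integral>\<^sup>+x. ennreal (g x) \<partial>\<mu>0) = ennreal (integral\<^sup>L \<mu>0 g)"
    using int_g g(2) by (simp add: nn_integral_eq_integral)
  finally have "(\<integral>\<^sup>+x. ennreal (g x) \<partial>ssp_measure \<mu>0 w \<xi>)
      = ennreal ((\<Sum>j. w j * g (\<xi> j)) + (1 - suminf w) * integral\<^sup>L \<mu>0 g)"
    using w int_g_nonneg sum_wg_nonneg
    by (simp add: ennreal_mult[symmetric] ennreal_plus[symmetric] del: ennreal_plus)
  then show ?thesis
    using g w int_g_nonneg sum_wg_nonneg
    by (subst integral_eq_nn_integral) (auto simp del: ennreal_plus)
qed

lemma integral_ssp_measure: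
  assumes \<mu>0: "prob_space \<mu>0" and w: "\<And>j. 0 \<le> w j" "summable w" "suminf w \<le> 1"
    and \<xi>: "\<And>j. \<xi> j \<in> space \<mu>0"
    and f: "f \<in> borel_measurable \<mu>0" and B: "\<And>x. x \<in> space \<mu>0 \<Longrightarrow> \<bar>f x\<bar> \<le> B"
  shows "integral\<^sup>L (ssp_measure \<mu>0 w \<xi>) f = (\<Sum>j. w j * f (\<xi> j)) + (1 - suminf w) * integral\<^sup>L \<mu>0 f"
proof -
  interpret prob_space \<mu>0 by fact
  interpret S: prob_space "ssp_measure \<mu>0 w \<xi>"
    by (rule prob_space_ssp_measure[OF \<mu>0 w \<xi>])
  define g where "g = (\<lambda>x. f x + B)"
  have "integral\<^sup>L (ssp_measure \<mu>0 w \<xi>) g = (\<Sum>j. w j * g (\<xi> j)) + (1 - suminf w) * integral\<^sup>L \<mu>0 g"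
  proof (rule integral_ssp_measure_nonneg[OF \<mu>0 w \<xi>, where C="2 * B"])
    show "g \<in> borel_measurable \<mu>0"
      using f unfolding g_def by measurable
    show "0 \<le> g x \<and> g x \<le> 2 * B" if "x \<in> space \<mu>0" for x
      using B[OF that] by (auto simp: g_def)
  qed
  moreover have "integrable \<mu>0 f" "integrable (ssp_measure \<mu>0 w \<xi>) f"
    using B f by (auto intro!: integrable_const_bound[where B=B] S.integrable_const_bound[where B=B])
  then have "integral\<^sup>L (ssp_measure \<mu>0 w \<xi>) g = integral\<^sup>L (ssp_measure \<mu>0 w \<xi>) f + B"
    "integral\<^sup>L \<mu>0 g = integral\<^sup>L \<mu>0 f + B"
    using S.prob_space by (simp_all add: g_def prob_space)
  moreover have "(\<Sum>j. w j * g (\<xi> j)) = (\<Sum>j. w j * f (\<xi> j)) + B * suminf w"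
  proof -
    have "summable (\<lambda>j. w j * f (\<xi> j))"
    proof (rule summable_comparison_test'[where N=0, OF summable_mult2[OF w(2)]])
      show "norm (w n * f (\<xi> n)) \<le> w n * B" for n
        using mult_left_mono[OF B[OF \<xi>[of n]] w(1)[of n]] w(1)[of n] by (simp add: abs_mult)
    qed
    then show ?thesis
      using w(2) by (simp add: g_def distrib_left suminf_add[symmetric] suminf_mult mult.commute)
  qed
  ultimately show ?thesis
    by (simp add: algebra_simps)
qed

lemma sum_sb_weight: "(\<Sum>j<n. sb_weight v j \<omega>) = 1 - (\<Prod>i<n. 1 - v i \<omega>)"
  by (induction n) (simp_all add: sb_weight_def algebra_simps)

lemma sb_weight_sums_1_iff:
  "(\<lambda>j. sb_weight v j \<omega>) sums 1 \<longleftrightarrow> (\<lambda>n. \<Prod>i<n. 1 - v i \<omega>) \<longlonglongrightarrow> 0"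
proof -
  have "(\<lambda>j. sb_weight v j \<omega>) sums 1 \<longleftrightarrow> (\<lambda>n. 1 - (\<Prod>i<n. 1 - v i \<omega>)) \<longlonglongrightarrow> 1 - 0"
    by (simp add: sums_def sum_sb_weight)
  also have "\<dots> \<longleftrightarrow> (\<lambda>n. \<Prod>i<n. 1 - v i \<omega>) \<longlonglongrightarrow> 0"
    using tendsto_diff[OF tendsto_const[of 1], of _ "1 - 0"] tendsto_diff[OF tendsto_const[of 1], of _ 0]
    by fastforce
  finally show ?thesis .
qed

context
  fixes v :: "nat \<Rightarrow> 'w \<Rightarrow> real" and \<omega> :: 'w
  assumes v01: "\<And>i. v i \<omega> \<in> {0..1}"
begin

lemma prod_one_minus_nonneg: "0 \<le> (\<Prod>i<n. 1 - v i \<omega>)"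
  using v01 by (auto intro!: prod_nonneg)

lemma prod_one_minus_le_1: "(\<Prod>i<n. 1 - v i \<omega>) \<le> 1"
  using v01 by (auto intro!: prod_le_1)

lemma sb_weight_nonneg: "0 \<le> sb_weight v j \<omega>"
  unfolding sb_weight_def using v01 prod_one_minus_nonneg by auto

lemma sb_weight_le: "sb_weight v j \<omega> \<le> v j \<omega>"
  unfolding sb_weight_def using mult_left_mono[OF prod_one_minus_le_1, of "v j \<omega>"] v01[of j] by simp

lemma sum_sb_weight_le_1: "(\<Sum>j<n. sb_weight v j \<omega>) \<le> 1"
  using prod_one_minus_nonneg by (simp add: sum_sb_weight)

lemma summable_sb_weight: "summable (\<lambda>j. sb_weight v j \<omega>)"
  by (rule summableI_nonneg_bounded[OF sb_weight_nonneg sum_sb_weight_le_1])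

lemma suminf_sb_weight_le_1: "(\<Sum>j. sb_weight v j \<omega>) \<le> 1"
  by (rule suminf_le_const[OF summable_sb_weight sum_sb_weight_le_1])

end

section \<open>Exchangeable sequences\<close>

lemma exchangeable_measurable: "exchangeable M v \<Longrightarrow> v i \<in> borel_measurable M"
  by (simp add: exchangeable_def)

lemma measurable_permuted_sequence:
  "(\<And>i. v i \<in> borel_measurable M) \<Longrightarrow> (\<lambda>\<omega> i. v (\<pi> i) \<omega>) \<in> measurable M (PiM UNIV (\<lambda>_. borel))"
  by (rule measurable_PiM_single') auto

lemma exchangeable_emeasure_permute:
  assumes ex: "exchangeable M v" and "\<pi> permutes {..<n}" and B: "B \<in> sets (PiM UNIV (\<lambda>_. borel))"
  shows "emeasure M ((\<lambda>\<omega> i. v (\<pi> i) \<omega>) -` B \<inter> space M) = emeasure M ((\<lambda>\<omega> i. v i \<omega>) -` B \<inter> space M)"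
proof -
  have m: "(\<lambda>\<omega> i. v (\<sigma> i) \<omega>) \<in> measurable M (PiM UNIV (\<lambda>_. borel))" for \<sigma>
    using ex by (intro measurable_permuted_sequence exchangeable_measurable)
  have "emeasure M ((\<lambda>\<omega> i. v (\<pi> i) \<omega>) -` B \<inter> space M)
      = emeasure (distr M (PiM UNIV (\<lambda>_. borel)) (\<lambda>\<omega> i. v (\<pi> i) \<omega>)) B"
    by (rule emeasure_distr[symmetric, OF m B])
  also have "\<dots> = emeasure (distr M (PiM UNIV (\<lambda>_. borel)) (\<lambda>\<omega> i. v (id i) \<omega>)) B"
    using assms by (simp add: exchangeable_def)
  also have "\<dots> = emeasure M ((\<lambda>\<omega> i. v (id i) \<omega>) -` B \<inter> space M)"
    by (rule emeasure_distr[OF m B])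
  finally show ?thesis
    by simp
qed

lemma exchangeable_integral_permute:
  fixes h :: "(nat \<Rightarrow> real) \<Rightarrow> real"
  assumes ex: "exchangeable M v" and "\<pi> permutes {..<n}" and h: "h \<in> borel_measurable (PiM UNIV (\<lambda>_. borel))"
  shows "integral\<^sup>L M (\<lambda>\<omega>. h (\<lambda>i. v (\<pi> i) \<omega>)) = integral\<^sup>L M (\<lambda>\<omega>. h (\<lambda>i. v i \<omega>))"
proof -
  have m: "(\<lambda>\<omega> i. v (\<sigma> i) \<omega>) \<in> measurable M (PiM UNIV (\<lambda>_. borel))" for \<sigma>
    using ex by (intro measurable_permuted_sequence exchangeable_measurable)
  have "integral\<^sup>L M (\<lambda>\<omega>. h (\<lambda>i. v (\<pi> i) \<omega>))
      = integral\<^sup>L (distr M (PiM UNIV (\<lambda>_. borel)) (\<lambda>\<omega> i. v (\<pi> i) \<omega>)) h"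
    by (rule integral_distr[symmetric, OF m h])
  also have "\<dots> = integral\<^sup>L (distr M (PiM UNIV (\<lambda>_. borel)) (\<lambda>\<omega> i. v (id i) \<omega>)) h"
    using assms by (simp add: exchangeable_def)
  also have "\<dots> = integral\<^sup>L M (\<lambda>\<omega>. h (\<lambda>i. v (id i) \<omega>))"
    by (rule integral_distr[OF m h])
  finally show ?thesis
    by simp
qed

lemma exchangeable_emeasure_marginal:
  assumes ex: "exchangeable M v" and A: "A \<in> sets borel"
  shows "emeasure M (v j -` A \<inter> space M) = emeasure M (v 0 -` A \<inter> space M)"
proof -
  have "Transposition.transpose 0 j permutes {..<Suc j}"
    by (rule permutes_swap_id) auto
  moreover have "{x :: nat \<Rightarrow> real. x 0 \<in> A} \<in> sets (PiM UNIV (\<lambda>_. borel))"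
    using measurable_sets[OF measurable_component_singleton[of 0 UNIV "\<lambda>_. borel"] A]
    by (simp add: space_PiM vimage_def)
  ultimately show ?thesis
    using exchangeable_emeasure_permute[OF ex] by (fastforce simp: vimage_def)
qed

lemma exists_permutes_onto_subset:
  assumes J: "J \<subseteq> {..<n}" "card J = N"
  obtains \<pi> where "\<pi> permutes {..<n}" "\<pi> ` {..<N} = J"
proof -
  have "finite J"
    using J(1) finite_subset by blast
  have "N \<le> n"
    using card_mono[OF _ J(1)] J(2) by simp
  obtain f where f: "bij_betw f {..<N} J"
    using ex_bij_betw_nat_finite[OF \<open>finite J\<close>] J(2) by (auto simp: atLeast0LessThan)
  have "card ({..<n} - {..<N}) = card ({..<n} - J)"
    using J \<open>N \<le> n\<close> \<open>finite J\<close> by (simp add: card_Diff_subset)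
  then obtain g where g: "bij_betw g ({..<n} - {..<N}) ({..<n} - J)"
    using finite_same_card_bij[of "{..<n} - {..<N}" "{..<n} - J"] by auto
  define \<pi> where "\<pi> x = (if x < N then f x else if x < n then g x else x)" for x
  have \<pi>_low: "bij_betw \<pi> {..<N} J"
    using f by (rule bij_betw_cong[THEN iffD1, rotated]) (auto simp: \<pi>_def)
  have "bij_betw \<pi> ({..<n} - {..<N}) ({..<n} - J)"
    using g by (rule bij_betw_cong[THEN iffD1, rotated]) (auto simp: \<pi>_def)
  then have "bij_betw \<pi> ({..<N} \<union> ({..<n} - {..<N})) (J \<union> ({..<n} - J))"
    using \<pi>_low by (intro bij_betw_combine) auto
  moreover have "{..<N} \<union> ({..<n} - {..<N}) = {..<n}" "J \<union> ({..<n} - J) = {..<n}"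
    using \<open>N \<le> n\<close> J(1) by auto
  ultimately have "\<pi> permutes {..<n}"
    by (intro bij_imp_permutes) (auto simp: \<pi>_def)
  moreover have "\<pi> ` {..<N} = J"
    using \<pi>_low by (simp add: bij_betw_def)
  ultimately show ?thesis
    by (rule that)
qed

lemma exchangeable_emeasure_all_in_eq:
  assumes ex: "exchangeable M v" and I: "I \<in> sets borel" and J: "J \<subseteq> {..<n}" "card J = N"
  shows "emeasure M {\<omega> \<in> space M. \<forall>j\<in>J. v j \<omega> \<in> I} = emeasure M {\<omega> \<in> space M. \<forall>j<N. v j \<omega> \<in> I}"
proof -
  obtain \<pi> where \<pi>: "\<pi> permutes {..<n}" "\<pi> ` {..<N} = J"
    using exists_permutes_onto_subset[OF J] .
  define B where "B = {x :: nat \<Rightarrow> real. \<forall>i<N. x i \<in> I}"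
  have "B = {x \<in> space (PiM UNIV (\<lambda>_. borel)). \<forall>i\<in>{..<N}. x i \<in> I}"
    by (auto simp: B_def space_PiM)
  also have "\<dots> \<in> sets (PiM UNIV (\<lambda>_. borel))"
  proof (intro sets.sets_Collect_finite_All)
    fix i :: nat
    show "{x \<in> space (PiM UNIV (\<lambda>_. borel)). x i \<in> I} \<in> sets (PiM UNIV (\<lambda>_. borel))"
      using measurable_sets[OF measurable_component_singleton[of i UNIV "\<lambda>_. borel"] I]
      by (simp add: vimage_def Int_def conj_commute)
  qed simp
  finally have "emeasure M ((\<lambda>\<omega> i. v (\<pi> i) \<omega>) -` B \<inter> space M) = emeasure M ((\<lambda>\<omega> i. v i \<omega>) -` B \<inter> space M)"
    by (rule exchangeable_emeasure_permute[OF ex \<pi>(1)])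
  moreover have "(\<lambda>\<omega> i. v (\<pi> i) \<omega>) -` B \<inter> space M = {\<omega> \<in> space M. \<forall>j\<in>J. v j \<omega> \<in> I}"
    using \<pi>(2) by (auto simp: B_def)
  ultimately show ?thesis
    by (auto simp: B_def Int_def conj_commute)
qed

lemma exchangeable_AE_card_in_less:
  assumes ex: "exchangeable M v" and I: "I \<in> sets borel"
    and null: "emeasure M {\<omega> \<in> space M. \<forall>j<N. v j \<omega> \<in> I} = 0"
  shows "AE \<omega> in M. card {j\<in>{..<n}. v j \<omega> \<in> I} < N"
proof -
  note [measurable] = exchangeable_measurable[OF ex]
  define \<J> where "\<J> = {J. J \<subseteq> {..<n} \<and> card J = N}"
  have "(\<Union>J\<in>\<J>. {\<omega> \<in> space M. \<forall>j\<in>J. v j \<omega> \<in> I}) \<in> null_sets M"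
  proof (rule null_sets_UN')
    show "countable \<J>"
      by (rule countable_subset[of _ "Pow {..<n}"]) (auto simp: \<J>_def intro: countable_finite)
    show "{\<omega> \<in> space M. \<forall>j\<in>J. v j \<omega> \<in> I} \<in> null_sets M" if "J \<in> \<J>" for J
    proof -
      have J: "J \<subseteq> {..<n}" "card J = N"
        using that by (auto simp: \<J>_def)
      then have "finite J"
        using finite_subset by blast
      then have "{\<omega> \<in> space M. \<forall>j\<in>J. v j \<omega> \<in> I} \<in> sets M"
        using I by measurable
      moreover have "emeasure M {\<omega> \<in> space M. \<forall>j\<in>J. v j \<omega> \<in> I} = 0"
        using exchangeable_emeasure_all_in_eq[OF ex I J] null by simp
      ultimately show ?thesis
        by (simp add: null_sets_def)
    qed
  qed
  then show ?thesis
  proof (rule AE_not_in[THEN AE_mp], intro AE_I2 impI)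
    fix \<omega> assume "\<omega> \<in> space M" "\<omega> \<notin> (\<Union>J\<in>\<J>. {\<omega> \<in> space M. \<forall>j\<in>J. v j \<omega> \<in> I})"
    then have no_N_subset: "\<not> (\<forall>j\<in>J. v j \<omega> \<in> I)" if "J \<in> \<J>" for J
      using that by blast
    show "card {j\<in>{..<n}. v j \<omega> \<in> I} < N"
    proof (rule ccontr)
      assume "\<not> card {j\<in>{..<n}. v j \<omega> \<in> I} < N"
      then have "N \<le> card {j\<in>{..<n}. v j \<omega> \<in> I}"
        by simp
      then obtain J where "J \<subseteq> {j\<in>{..<n}. v j \<omega> \<in> I}" "card J = N"
        using obtain_subset_with_card_n by blast
      then show False
        using no_N_subset[of J] by (auto simp: \<J>_def)
    qed
  qed
qed

text \<open>
  If all of v 0, ..., v (N - 1) lie in I with probability 0, then almost surely fewer than N of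
  v 0, ..., v (n - 1) lie in I for every n, whereas the expected number of them is n times
  the positive probability that v 0 lies in I.
\<close>
lemma exchangeable_emeasure_all_in_pos:
  assumes "prob_space M" and ex: "exchangeable M v" and I: "I \<in> sets borel"
    and pos: "emeasure M (v 0 -` I \<inter> space M) > 0"
  shows "emeasure M {\<omega> \<in> space M. \<forall>j<N. v j \<omega> \<in> I} > 0"
proof (rule ccontr)
  interpret prob_space M by fact
  note [measurable] = exchangeable_measurable[OF ex]
  define E where "E j = v j -` I \<inter> space M" for j
  have E_sets: "E j \<in> sets M" for j
    unfolding E_def using I by measurable
  define q where "q = measure M (E 0)"
  have q: "measure M (E j) = q" for j
    using exchangeable_emeasure_marginal[OF ex I, of j] by (simp add: q_def E_def measure_def)
  have "q > 0"
    using pos by (simp add: q_def E_def emeasure_eq_measure)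
  obtain n :: nat where n: "real N < real n * q"
    using reals_Archimedean3[OF \<open>q > 0\<close>] by blast
  assume "\<not> ?thesis"
  then have "AE \<omega> in M. card {j\<in>{..<n}. v j \<omega> \<in> I} < N"
    by (intro exchangeable_AE_card_in_less[OF ex I]) (simp add: zero_less_iff_neq_zero)
  then have "AE \<omega> in M. (\<Sum>j<n. indicator (E j) \<omega>) \<le> (real N :: real)"
  proof eventually_elim
    case (elim \<omega>)
    have "(\<Sum>j<n. indicator (E j) \<omega>) \<le> real (card {j\<in>{..<n}. v j \<omega> \<in> I})"
      by (simp add: E_def indicator_def of_bool_def sum.If_cases Int_def) (intro card_mono; auto)
    then show ?case
      using elim by linarith
  qed
  then have "integral\<^sup>L M (\<lambda>\<omega>. \<Sum>j<n. indicator (E j) \<omega>) \<le> integral\<^sup>L M (\<lambda>_. real N)"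
    using E_sets by (intro integral_mono_AE) (auto simp: emeasure_eq_measure)
  moreover have "integral\<^sup>L M (\<lambda>\<omega>. \<Sum>j<n. indicator (E j) \<omega>) = real n * q"
    using E_sets q by (simp add: Bochner_Integration.integral_sum emeasure_eq_measure)
  ultimately show False
    using n by (simp add: prob_space)
qed

section \<open>Properness\<close>

definition stick_remainder :: "(nat \<Rightarrow> real) \<Rightarrow> real" where
  "stick_remainder x = lim (\<lambda>n. \<Prod>i<n. 1 - x i)"

lemma
  assumes "\<And>i. x i \<in> {0..1}"
  shows prod_one_minus_LIMSEQ_stick_remainder: "(\<lambda>n. \<Prod>i<n. 1 - x i) \<longlonglongrightarrow> stick_remainder x"
    and stick_remainder_le_prod: "stick_remainder x \<le> (\<Prod>i<n. 1 - x i)"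
    and stick_remainder_nonneg: "0 \<le> stick_remainder x"
proof -
  have nonneg: "0 \<le> (\<Prod>i<n. 1 - x i)" for n
    using assms by (auto intro!: prod_nonneg)
  have "decseq (\<lambda>n. \<Prod>i<n. 1 - x i)"
    using assms nonneg by (intro decseq_SucI) (auto intro!: mult_left_le)
  then obtain l where l: "(\<lambda>n. \<Prod>i<n. 1 - x i) \<longlonglongrightarrow> l" "\<And>n. l \<le> (\<Prod>i<n. 1 - x i)"
    using decseq_convergent[of _ 0] nonneg by blast
  moreover have "stick_remainder x = l"
    using l(1) by (simp add: stick_remainder_def limI)
  moreover have "0 \<le> l"
    using l(1) nonneg by (intro LIMSEQ_le_const) auto
  ultimately show "(\<lambda>n. \<Prod>i<n. 1 - x i) \<longlonglongrightarrow> stick_remainder x"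
    "stick_remainder x \<le> (\<Prod>i<n. 1 - x i)" "0 \<le> stick_remainder x"
    by simp_all
qed

lemma stick_remainder_permute:
  assumes "\<pi> permutes {..<N}"
  shows "stick_remainder (\<lambda>i. x (\<pi> i)) = stick_remainder x"
proof -
  have "eventually (\<lambda>n. (\<Prod>i<n. 1 - x (\<pi> i)) = (\<Prod>i<n. 1 - x i)) sequentially"
    using eventually_ge_at_top[of N]
  proof eventually_elim
    case (elim n)
    then have "\<pi> permutes {..<n}"
      using assms by (auto intro: permutes_subset)
    then show ?case
      by (subst prod.permute[of \<pi>]) (auto simp: comp_def)
  qed
  then show ?thesis
    unfolding stick_remainder_def lim_def by (simp add: tendsto_cong)
qed

lemma measurable_stick_remainder [measurable]:
  "stick_remainder \<in> borel_measurable (PiM UNIV (\<lambda>_. borel))"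
  unfolding stick_remainder_def
proof (rule borel_measurable_lim_metric)
  fix n
  have "(\<lambda>x::nat\<Rightarrow>real. x i) \<in> borel_measurable (PiM UNIV (\<lambda>_. borel))" for i
    by (rule measurable_component_singleton) simp
  then show "(\<lambda>x::nat\<Rightarrow>real. \<Prod>i<n. 1 - x i) \<in> borel_measurable (PiM UNIV (\<lambda>_. borel))"
    by measurable
qed

lemma sum_le_minus_ln_prod_one_minus:
  fixes x :: "nat \<Rightarrow> real"
  assumes "\<And>i. x i \<le> 1" and "(\<Prod>i<n. 1 - x i) > 0"
  shows "(\<Sum>i<n. x i) \<le> - ln (\<Prod>i<n. 1 - x i)"
proof -
  have pos: "0 < 1 - x i" if i: "i < n" for i
  proof -
    have "1 - x i \<noteq> 0"
    proof
      assume "1 - x i = 0"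
      then have "(\<Prod>i<n. 1 - x i) = 0"
        using i by (auto simp: prod_zero_iff)
      then show False
        using assms(2) by linarith
    qed
    then show ?thesis
      using assms(1)[of i] by linarith
  qed
  have "1 - x i \<noteq> 0" if "i \<in> {..<n}" for i
    using pos[of i] that by simp
  then have "ln (\<Prod>i<n. 1 - x i) = (\<Sum>i<n. ln (1 - x i))"
    by (rule ln_prod[OF finite_lessThan])
  also have "\<dots> \<le> (\<Sum>i<n. - x i)"
    using ln_le_minus_one[OF pos] by (intro sum_mono) simp
  finally show ?thesis
    by (simp add: sum_negf)
qed

lemma sum_le_minus_ln_if_stick_remainder_gt:
  assumes "\<And>i. x i \<in> {0..1}" and "0 < c" and "c < stick_remainder x"
  shows "(\<Sum>i<n. x i) \<le> - ln c"
proof -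
  have "c < (\<Prod>i<n. 1 - x i)"
    using assms stick_remainder_le_prod by (meson less_le_trans)
  then have "(\<Sum>i<n. x i) \<le> - ln (\<Prod>i<n. 1 - x i)"
    using assms by (intro sum_le_minus_ln_prod_one_minus) auto
  also have "\<dots> \<le> - ln c"
    using \<open>c < (\<Prod>i<n. 1 - x i)\<close> assms(2) by simp
  finally show ?thesis .
qed

lemma exchangeable_integral_on_stick_remainder_event:
  assumes ex: "exchangeable M v"
  shows "integral\<^sup>L M (\<lambda>\<omega>. v k \<omega> * of_bool (c < stick_remainder (\<lambda>i. v i \<omega>)))
    = integral\<^sup>L M (\<lambda>\<omega>. v 0 \<omega> * of_bool (c < stick_remainder (\<lambda>i. v i \<omega>)))"
proof -
  define h where "h x = x 0 * of_bool (c < stick_remainder x)" for x :: "nat \<Rightarrow> real"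
  have "(\<lambda>x::nat\<Rightarrow>real. x 0) \<in> borel_measurable (PiM UNIV (\<lambda>_. borel))"
    by (rule measurable_component_singleton) simp
  then have h: "h \<in> borel_measurable (PiM UNIV (\<lambda>_. borel))"
    unfolding h_def by measurable
  have \<pi>: "Transposition.transpose 0 k permutes {..<Suc k}"
    by (rule permutes_swap_id) auto
  have "stick_remainder (\<lambda>i. v (Transposition.transpose 0 k i) \<omega>) = stick_remainder (\<lambda>i. v i \<omega>)" for \<omega>
    using stick_remainder_permute[OF \<pi>, of "\<lambda>i. v i \<omega>"] by simp
  then show ?thesis
    using exchangeable_integral_permute[OF ex \<pi> h] by (simp add: h_def)
qed

lemma AE_stick_remainder_le:
  assumes "prob_space M" and ex: "exchangeable M v"
    and v01: "\<And>i \<omega>. \<omega> \<in> space M \<Longrightarrow> v i \<omega> \<in> {0..1}"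
    and pos: "AE \<omega> in M. v 0 \<omega> > 0" and c: "0 < c" "c \<le> 1"
  shows "AE \<omega> in M. stick_remainder (\<lambda>i. v i \<omega>) \<le> c"
proof -
  interpret prob_space M by fact
  note [measurable] = exchangeable_measurable[OF ex]
  have [measurable]: "(\<lambda>\<omega> i. v i \<omega>) \<in> measurable M (PiM UNIV (\<lambda>_. borel))"
    by (rule measurable_PiM_single') auto
  define H where "H k = (\<lambda>\<omega>. v k \<omega> * of_bool (c < stick_remainder (\<lambda>i. v i \<omega>)))" for k
  have [measurable]: "H k \<in> borel_measurable M" for k
    unfolding H_def by measurable
  have int: "integrable M (H k)" for k
    by (rule integrable_const_bound[where B=1]) (use v01 in \<open>auto simp: H_def\<close>)
  have bound: "real n * integral\<^sup>L M (H 0) \<le> - ln c" for n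
  proof -
    have H_eq: "integral\<^sup>L M (H k) = integral\<^sup>L M (H 0)" for k
      using exchangeable_integral_on_stick_remainder_event[OF ex] by (simp add: H_def)
    have "(\<Sum>k<n. integral\<^sup>L M (H k)) = (\<Sum>k<n. integral\<^sup>L M (H 0))"
      by (intro sum.cong refl H_eq)
    then have "real n * integral\<^sup>L M (H 0) = (\<Sum>k<n. integral\<^sup>L M (H k))"
      by simp
    also have "\<dots> = integral\<^sup>L M (\<lambda>\<omega>. \<Sum>k<n. H k \<omega>)"
      using int by simp
    also have "\<dots> \<le> integral\<^sup>L M (\<lambda>\<omega>. - ln c)"
    proof (rule integral_mono)
      fix \<omega> assume "\<omega> \<in> space M"
      then show "(\<Sum>k<n. H k \<omega>) \<le> - ln c"
        using v01 c sum_le_minus_ln_if_stick_remainder_gt[of "\<lambda>i. v i \<omega>" c n]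
        by (auto simp: H_def)
    qed (use int in auto)
    finally show ?thesis
      by (simp add: prob_space)
  qed
  have "integral\<^sup>L M (H 0) = 0"
  proof (rule ccontr)
    assume "integral\<^sup>L M (H 0) \<noteq> 0"
    moreover have "0 \<le> integral\<^sup>L M (H 0)"
      by (rule Bochner_Integration.integral_nonneg) (use v01 in \<open>auto simp: H_def\<close>)
    ultimately have H0_pos: "integral\<^sup>L M (H 0) > 0"
      by simp
    obtain n :: nat where "- ln c < real n * integral\<^sup>L M (H 0)"
      using reals_Archimedean3[OF H0_pos] by blast
    then show False
      using bound[of n] by simp
  qed
  then have "AE \<omega> in M. H 0 \<omega> = 0"
    using integral_nonneg_eq_0_iff_AE[OF int[of 0]] v01 by (auto simp: H_def)
  then show ?thesis
    using pos by eventually_elim (auto simp: H_def)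
qed

lemma exchangeable_stick_breaking_proper:
  assumes "prob_space M" and "exchangeable M v"
    and v01: "\<And>i \<omega>. \<omega> \<in> space M \<Longrightarrow> v i \<omega> \<in> {0..1}"
    and "AE \<omega> in M. v 0 \<omega> > 0"
  shows "AE \<omega> in M. (\<lambda>j. sb_weight v j \<omega>) sums 1"
proof -
  have "AE \<omega> in M. \<forall>m. stick_remainder (\<lambda>i. v i \<omega>) \<le> inverse (real (Suc m))"
    unfolding AE_all_countable using assms
    by (intro allI AE_stick_remainder_le) (auto simp: inverse_le_1_iff)
  then show ?thesis
  proof (rule AE_mp[OF _ AE_I2[OF impI]])
    fix \<omega> assume \<omega>: "\<omega> \<in> space M"
      and le: "\<forall>m. stick_remainder (\<lambda>i. v i \<omega>) \<le> inverse (real (Suc m))"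
    have "stick_remainder (\<lambda>i. v i \<omega>) \<le> 0"
      using le by (intro LIMSEQ_le_const[OF LIMSEQ_inverse_real_of_nat]) auto
    moreover have "0 \<le> stick_remainder (\<lambda>i. v i \<omega>)"
      using v01 \<omega> by (intro stick_remainder_nonneg) auto
    ultimately have "stick_remainder (\<lambda>i. v i \<omega>) = 0"
      by simp
    then show "(\<lambda>j. sb_weight v j \<omega>) sums 1"
      using prod_one_minus_LIMSEQ_stick_remainder[of "\<lambda>i. v i \<omega>"] v01 \<omega>
      by (simp add: sb_weight_sums_1_iff)
  qed
qed

lemma beta_density_pos:
  assumes "0 < a" "0 < b" "x \<in> {0<..<1}"
  shows "0 < beta_density a b x"
  using assms by (simp add: beta_density_def Beta_def)

lemma AE_pos_if_beta_distributed:
  assumes X: "distributed M lborel X (\<lambda>x. ennreal (beta_density a b x))"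
  shows "AE \<omega> in M. X \<omega> > 0"
proof (rule AE_I')
  have "emeasure M (X -` {..0} \<inter> space M) = (\<integral>\<^sup>+x. ennreal (beta_density a b x) * indicator {..0} x \<partial>lborel)"
    using X by (rule distributed_emeasure) simp
  also have "\<dots> = 0"
  proof -
    have "(\<lambda>x. ennreal (beta_density a b x) * indicator {..0} x) = (\<lambda>x. 0)"
      by (auto simp: fun_eq_iff beta_density_def indicator_def)
    then show ?thesis
      by simp
  qed
  finally show "X -` {..0} \<inter> space M \<in> null_sets M"
    using measurable_sets[OF distributed_measurable[OF X], of "{..0}"] by (simp add: null_sets_def)
qed auto

lemma emeasure_pos_if_beta_distributed:
  assumes X: "distributed M lborel X (\<lambda>x. ennreal (beta_density a b x))"
    and ab: "0 < a" "0 < b" and I: "0 < \<eta>" "\<eta> < \<delta>" "\<delta> < 1"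
  shows "emeasure M (X -` {\<eta>..\<delta>} \<inter> space M) > 0"
proof (rule ccontr)
  have [measurable]: "(\<lambda>x. ennreal (beta_density a b x)) \<in> borel_measurable lborel"
    using X by (rule distributed_borel_measurable)
  assume "\<not> ?thesis"
  then have "(\<integral>\<^sup>+x. ennreal (beta_density a b x) * indicator {\<eta>..\<delta>} x \<partial>lborel) = 0"
    using distributed_emeasure[OF X, of "{\<eta>..\<delta>}"] by simp
  then have "AE x in lborel. ennreal (beta_density a b x) * indicator {\<eta>..\<delta>} x = 0"
    by (simp add: nn_integral_0_iff_AE)
  then have "AE x in lborel. x \<notin> {\<eta>..\<delta>}"
  proof eventually_elim
    fix x assume "ennreal (beta_density a b x) * indicator {\<eta>..\<delta>} x = 0"
    then show "x \<notin> {\<eta>..\<delta>}"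
      using beta_density_pos[OF ab, of x] I by (auto simp: indicator_def)
  qed
  then have "{\<eta>..\<delta>} \<in> null_sets lborel"
    by (subst AE_iff_null_sets) auto
  then show False
    using I by (simp add: null_sets_def)
qed

section \<open>Supports\<close>

lemma AE_in_msupport:
  fixes \<nu> :: "'a::second_countable_topology measure"
  assumes S: "sets \<nu> = sets borel"
  shows "AE x in \<nu>. x \<in> msupport \<nu>"
proof -
  obtain \<B> :: "'a set set" where \<B>: "countable \<B>" "\<And>C. C \<in> \<B> \<Longrightarrow> open C"
    "\<And>S. open S \<Longrightarrow> \<exists>U. U \<subseteq> \<B> \<and> S = \<Union>U"
    by (rule univ_second_countable) blast
  \<comment> \<open>The complement of the support is covered by the countably many null basic open sets.\<close>
  have "space \<nu> - msupport \<nu> \<subseteq> (\<Union>b\<in>{b\<in>\<B>. emeasure \<nu> b = 0}. b)"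
  proof
    fix x assume "x \<in> space \<nu> - msupport \<nu>"
    then obtain U where U: "open U" "x \<in> U" "emeasure \<nu> U = 0"
      unfolding msupport_def by (auto simp: zero_less_iff_neq_zero)
    obtain b where b: "b \<in> \<B>" "x \<in> b" "b \<subseteq> U"
      using \<B>(3)[OF U(1)] U(2) by blast
    then have "emeasure \<nu> b \<le> emeasure \<nu> U"
      using U(1) S by (intro emeasure_mono) auto
    then show "x \<in> (\<Union>b\<in>{b\<in>\<B>. emeasure \<nu> b = 0}. b)"
      using b U(3) by auto
  qed
  moreover have "(\<Union>b\<in>{b\<in>\<B>. emeasure \<nu> b = 0}. b) \<in> null_sets \<nu>"
    using \<B>(1,2) S by (intro null_sets_UN') (auto simp: null_sets_def)
  ultimately show ?thesis
    by (auto intro!: AE_I')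
qed

lemma closed_msupport: "closed (msupport \<nu>)"
  unfolding closed_def open_subopen[of "- msupport \<nu>"]
  by (auto simp: msupport_def)

lemma msupport_ssp_measure_subset:
  assumes "\<And>j. \<xi> j \<in> msupport \<mu>0" and "sets \<mu>0 = sets borel"
  shows "msupport (ssp_measure \<mu>0 w \<xi>) \<subseteq> msupport \<mu>0"
proof
  fix x assume x: "x \<in> msupport (ssp_measure \<mu>0 w \<xi>)"
  show "x \<in> msupport \<mu>0"
    unfolding msupport_def
  proof (intro CollectI allI impI)
    fix U assume U: "open U" "x \<in> U"
    show "emeasure \<mu>0 U > 0"
    proof (rule ccontr)
      assume "\<not> emeasure \<mu>0 U > 0"
      then have "emeasure \<mu>0 U = 0"
        by (simp add: zero_less_iff_neq_zero)
      moreover have "\<xi> j \<notin> U" for j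
        using assms(1)[of j] U(1) \<open>\<not> emeasure \<mu>0 U > 0\<close> by (auto simp: msupport_def)
      ultimately have "emeasure (ssp_measure \<mu>0 w \<xi>) U = 0"
        using U(1) assms(2) by (simp add: emeasure_ssp_measure)
      then show False
        using x U by (auto simp: msupport_def)
    qed
  qed
qed

lemma integral_pos_if_in_msupport:
  fixes f :: "'a::topological_space \<Rightarrow> real"
  assumes \<nu>: "prob_space \<nu>" "sets \<nu> = sets borel" and x: "x \<in> msupport \<nu>"
    and f: "continuous_on UNIV f" "\<And>y. 0 \<le> f y" "\<And>y. f y \<le> B" "0 < f x"
  shows "0 < integral\<^sup>L \<nu> f"
proof -
  interpret prob_space \<nu> by fact
  have [measurable]: "f \<in> borel_measurable \<nu>"
    using borel_measurable_continuous_onI[OF f(1)] \<nu>(2) by (simp cong: measurable_cong_sets)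
  have "integrable \<nu> f"
    using f(2,3) by (intro integrable_const_bound[where B=B]) auto
  have "integral\<^sup>L \<nu> f \<noteq> 0"
  proof
    assume "integral\<^sup>L \<nu> f = 0"
    then have "AE y in \<nu>. f y = 0"
      using \<open>integrable \<nu> f\<close> f(2) by (simp add: integral_nonneg_eq_0_iff_AE)
    then have "AE y in \<nu>. y \<notin> {y. 0 < f y}"
      by eventually_elim simp
    moreover have "open {y. 0 < f y}"
      using f(1) by (intro open_Collect_less) auto
    ultimately have "{y. 0 < f y} \<in> null_sets \<nu>"
      using \<nu>(2) by (subst AE_iff_null_sets) auto
    moreover have "emeasure \<nu> {y. 0 < f y} > 0"
      using x f(4) \<open>open {y. 0 < f y}\<close> by (simp add: msupport_def)
    ultimately show False
      by (auto dest: null_setsD1)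
  qed
  then show ?thesis
    using f(2) by (simp add: order_less_le)
qed

lemma integral_eq_0_if_zero_on_msupport:
  fixes \<mu> :: "'a::second_countable_topology measure"
  assumes "sets \<mu> = sets borel" and "f \<in> borel_measurable borel" and "\<And>y. y \<in> msupport \<mu> \<Longrightarrow> f y = 0"
  shows "integral\<^sup>L \<mu> f = 0"
proof -
  have "AE y in \<mu>. f y = 0"
    using AE_in_msupport[OF assms(1)] by eventually_elim (rule assms(3))
  moreover have "f \<in> borel_measurable \<mu>"
    using assms(1,2) by (simp cong: measurable_cong_sets)
  ultimately have "integral\<^sup>L \<mu> f = integral\<^sup>L \<mu> (\<lambda>_. 0)"
    by (intro integral_cong_AE) auto
  then show ?thesis
    by simp
qed

lemma not_in_law_support_if_AE_integral_eq:
  fixes f :: "'a::topological_space \<Rightarrow> real"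
  assumes f: "continuous_on UNIV f" "bounded (range f)"
    and AE: "AE \<omega> in M. integral\<^sup>L (\<mu> \<omega>) f = c" and ne: "integral\<^sup>L \<nu> f \<noteq> c"
  shows "\<not> in_law_support M \<mu> \<nu>"
proof
  assume law: "in_law_support M \<mu> \<nu>"
  define e where "e = \<bar>integral\<^sup>L \<nu> f - c\<bar>"
  define A where "A = {\<omega> \<in> space M. \<forall>i<1::nat. \<bar>integral\<^sup>L (\<mu> \<omega>) f - integral\<^sup>L \<nu> f\<bar> < e}"
  have "e > 0"
    using ne by (simp add: e_def)
  then have "measure M A > 0"
    using law[unfolded in_law_support_def, THEN spec, THEN spec, THEN spec, of 1 "\<lambda>_. f" e] f
    by (simp add: A_def)
  moreover obtain N where N: "{\<omega> \<in> space M. integral\<^sup>L (\<mu> \<omega>) f \<noteq> c} \<subseteq> N" "emeasure M N = 0" "N \<in> sets M"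
    using AE by (rule AE_E)
  have "A \<subseteq> N"
    using N(1) by (auto simp: A_def e_def)
  then have "emeasure M A = 0"
    using N(2,3) emeasure_mono[of A N M] by simp
  ultimately show False
    by (simp add: measure_def)
qed

text \<open>
  A bump function at a point of the support of \<nu> outside T has positive integral under \<nu>
  but, almost surely, integral 0 under the random measure.
\<close>
lemma msupport_subset_if_in_law_support:
  fixes \<mu> :: "'w \<Rightarrow> 'a::{metric_space, second_countable_topology} measure"
  assumes \<nu>: "prob_space \<nu>" "sets \<nu> = sets borel"
    and sets_\<mu>: "\<And>\<omega>. sets (\<mu> \<omega>) = sets borel"
    and T: "closed T" "AE \<omega> in M. msupport (\<mu> \<omega>) \<subseteq> T"
    and law: "in_law_support M \<mu> \<nu>"
  shows "msupport \<nu> \<subseteq> T"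
proof
  fix x assume x: "x \<in> msupport \<nu>"
  show "x \<in> T"
  proof (rule ccontr)
    assume "x \<notin> T"
    then obtain r where r: "0 < r" "ball x r \<subseteq> - T"
      using T(1) unfolding closed_def open_contains_ball by blast
    define f where "f y = max 0 (1 - dist y x / r)" for y
    have f_cont: "continuous_on UNIV f"
      unfolding f_def using r by (intro continuous_intros) auto
    have f_bounds: "0 \<le> f y" "f y \<le> 1" for y
      unfolding f_def using r by auto
    have f_pos: "0 < f y \<longleftrightarrow> y \<in> ball x r" for y
      unfolding f_def using r by (auto simp: dist_commute less_max_iff_disj divide_less_eq_1)
    have "AE \<omega> in M. integral\<^sup>L (\<mu> \<omega>) f = 0"
      using T(2)
    proof eventually_elim
      case (elim \<omega>)
      show ?case
      proof (rule integral_eq_0_if_zero_on_msupport[OF sets_\<mu>])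
        show "f \<in> borel_measurable borel"
          using f_cont by (rule borel_measurable_continuous_onI)
        show "f y = 0" if "y \<in> msupport (\<mu> \<omega>)" for y
          using that elim r(2) f_pos[of y] f_bounds(1)[of y] by force
      qed
    qed
    moreover have "integral\<^sup>L \<nu> f \<noteq> 0"
      using integral_pos_if_in_msupport[OF \<nu> x f_cont f_bounds] f_pos r(1) by simp
    moreover have "bounded (range f)"
      using f_bounds by (auto simp: bounded_iff intro!: exI[of _ 1])
    ultimately show False
      using not_in_law_support_if_AE_integral_eq[OF f_cont] law by blast
  qed
qed

section \<open>Discrete approximation\<close>

lemma uniform_bound_finite_family:
  fixes f :: "nat \<Rightarrow> 'a \<Rightarrow> real"
  assumes "\<And>i. i < k \<Longrightarrow> bounded (range (f i))"
  obtains B where "0 \<le> B" "\<And>i y. i < k \<Longrightarrow> \<bar>f i y\<bar> \<le> B"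
proof -
  have "bounded (\<Union>i<k. range (f i))"
    using assms by auto
  then obtain B where "B > 0" "\<And>z. z \<in> (\<Union>i<k. range (f i)) \<Longrightarrow> \<bar>z\<bar> \<le> B"
    unfolding bounded_pos by auto
  then show ?thesis
    using that[of B] by auto
qed

lemma sum_measure_eq_1_if_AE_partition:
  assumes "prob_space \<nu>" "finite X" "\<And>x. x \<in> X \<Longrightarrow> A x \<in> sets \<nu>"
    and "AE y in \<nu>. (\<Sum>x\<in>X. indicator (A x) y) = (1::real)"
  shows "(\<Sum>x\<in>X. measure \<nu> (A x)) = 1"
proof -
  interpret prob_space \<nu> by fact
  have "(\<Sum>x\<in>X. measure \<nu> (A x)) = integral\<^sup>L \<nu> (\<lambda>y. \<Sum>x\<in>X. indicator (A x) y :: real)"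
    using assms(3) by (simp add: Bochner_Integration.integral_sum emeasure_eq_measure)
  also have "\<dots> = integral\<^sup>L \<nu> (\<lambda>_. 1)"
    using assms(3,4) by (intro integral_cong_AE) auto
  finally show ?thesis
    by (simp add: prob_space)
qed

lemma integral_approx_by_AE_partition:
  fixes f :: "'a \<Rightarrow> real"
  assumes \<nu>: "prob_space \<nu>" and X: "finite X" and A: "\<And>x. x \<in> X \<Longrightarrow> A x \<in> sets \<nu>"
    and cover: "AE y in \<nu>. (\<Sum>x\<in>X. indicator (A x) y) = (1::real)"
    and f: "f \<in> borel_measurable \<nu>" "\<And>y. \<bar>f y\<bar> \<le> B"
    and close: "\<And>x y. x \<in> X \<Longrightarrow> y \<in> A x \<Longrightarrow> \<bar>f x - f y\<bar> \<le> h"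
  shows "\<bar>(\<Sum>x\<in>X. measure \<nu> (A x) * f x) - integral\<^sup>L \<nu> f\<bar> \<le> h"
proof -
  interpret prob_space \<nu> by fact
  have int: "integrable \<nu> (\<lambda>y. g y * indicator (A x) y)"
    if "x \<in> X" "g \<in> borel_measurable \<nu>" "\<And>y. \<bar>g y\<bar> \<le> C" for g :: "'a \<Rightarrow> real" and x C
    using that A
    by (intro integrable_const_bound[where B=C]) (auto simp: indicator_def intro: order_trans[OF abs_ge_zero])
  have "integral\<^sup>L \<nu> f = integral\<^sup>L \<nu> (\<lambda>y. \<Sum>x\<in>X. f y * indicator (A x) y)"
    using cover f(1) A
    by (intro integral_cong_AE) (auto elim!: eventually_mono simp: sum_distrib_left[symmetric])
  also have "\<dots> = (\<Sum>x\<in>X. integral\<^sup>L \<nu> (\<lambda>y. f y * indicator (A x) y))"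
    using int f by (intro Bochner_Integration.integral_sum) auto
  moreover have "integral\<^sup>L \<nu> (\<lambda>y. (f x - f y) * indicator (A x) y)
      = measure \<nu> (A x) * f x - integral\<^sup>L \<nu> (\<lambda>y. f y * indicator (A x) y)" if x: "x \<in> X" for x
  proof -
    have "integral\<^sup>L \<nu> (\<lambda>y. (f x - f y) * indicator (A x) y)
        = integral\<^sup>L \<nu> (\<lambda>y. f x * indicator (A x) y - f y * indicator (A x) y)"
      by (simp add: left_diff_distrib)
    also have "\<dots> = integral\<^sup>L \<nu> (\<lambda>y. f x * indicator (A x) y) - integral\<^sup>L \<nu> (\<lambda>y. f y * indicator (A x) y)"
      using int[OF x, of "\<lambda>_. f x" "\<bar>f x\<bar>"] int[OF x f] by (intro Bochner_Integration.integral_diff) auto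
    finally show ?thesis
      using A[OF x] by (simp add: mult.commute)
  qed
  ultimately have "(\<Sum>x\<in>X. measure \<nu> (A x) * f x) - integral\<^sup>L \<nu> f
      = (\<Sum>x\<in>X. integral\<^sup>L \<nu> (\<lambda>y. (f x - f y) * indicator (A x) y))"
    by (simp add: sum_subtractf)
  also have "\<bar>\<dots>\<bar> \<le> (\<Sum>x\<in>X. h * measure \<nu> (A x))"
  proof (rule order_trans[OF sum_abs sum_mono])
    fix x assume x: "x \<in> X"
    have "\<bar>integral\<^sup>L \<nu> (\<lambda>y. (f x - f y) * indicator (A x) y)\<bar>
        \<le> integral\<^sup>L \<nu> (\<lambda>y. \<bar>(f x - f y) * indicator (A x) y\<bar>)"
      by (rule integral_abs_bound)
    also have "\<dots> \<le> integral\<^sup>L \<nu> (\<lambda>y. h * indicator (A x) y)"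
    proof (rule integral_mono)
      have "(\<lambda>y. f x - f y) \<in> borel_measurable \<nu>"
        using f(1) by measurable
      moreover have "\<bar>f x - f y\<bar> \<le> 2 * B" for y
        using f(2)[of x] f(2)[of y] by linarith
      ultimately show "integrable \<nu> (\<lambda>y. \<bar>(f x - f y) * indicator (A x) y\<bar>)"
        by (intro integrable_abs int[OF x])
      show "integrable \<nu> (\<lambda>y. h * indicator (A x) y)"
        using int[OF x, of "\<lambda>_. h" "\<bar>h\<bar>"] by simp
      show "\<bar>(f x - f y) * indicator (A x) y\<bar> \<le> h * indicator (A x) y" for y
        using close[OF x, of y] by (auto simp: indicator_def)
    qed
    also have "\<dots> = h * measure \<nu> (A x)"
      using A[OF x] by simp
    finally show "\<bar>integral\<^sup>L \<nu> (\<lambda>y. (f x - f y) * indicator (A x) y)\<bar> \<le> h * measure \<nu> (A x)" .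
  qed
  also have "\<dots> = h"
    using sum_measure_eq_1_if_AE_partition[OF \<nu> X A cover] by (simp add: sum_distrib_left[symmetric])
  finally show ?thesis .
qed

lemma exists_representatives:
  assumes "finite (c ` S)"
  obtains X where "X \<subseteq> S" "finite X" "\<And>y. y \<in> S \<Longrightarrow> (\<Sum>x\<in>X. indicator {z. c z = c x} y) = (1::real)"
proof -
  define X where "X = inv_into S c ` c ` S"
  have c_X: "c (inv_into S c d) = d" if "d \<in> c ` S" for d
    using that by (rule f_inv_into_f)
  have inj: "inj_on c X"
  proof (rule inj_onI)
    fix x x' assume "x \<in> X" "x' \<in> X" "c x = c x'"
    then obtain d d' where "d \<in> c ` S" "d' \<in> c ` S" "x = inv_into S c d" "x' = inv_into S c d'"
      unfolding X_def by blast
    with \<open>c x = c x'\<close> show "x = x'"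
      using c_X by metis
  qed
  have "c ` X = (\<lambda>d. c (inv_into S c d)) ` c ` S"
    by (simp add: X_def image_image)
  also have "\<dots> = c ` S"
    using c_X by (simp cong: image_cong)
  finally have c_image_X: "c ` X = c ` S" .
  show ?thesis
  proof (rule that)
    show "X \<subseteq> S" "finite X"
      using assms by (auto simp: X_def inv_into_into)
    fix y assume "y \<in> S"
    have "(\<Sum>x\<in>X. indicator {z. c z = c x} y) = (\<Sum>x\<in>X. if c y = c x then 1 else 0 :: real)"
      by (simp add: indicator_def of_bool_def)
    also have "\<dots> = (\<Sum>d\<in>c ` X. if c y = d then 1 else 0)"
      by (simp add: sum.reindex[OF inj])
    also have "\<dots> = 1"
      using \<open>y \<in> S\<close> assms by (simp add: c_image_X)
    finally show "(\<Sum>x\<in>X. indicator {z. c z = c x} y) = (1::real)" .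
  qed
qed

text \<open>
  The cells are the level sets of the finitely many functions rounded down to multiples of h;
  each cell meeting the support of \<nu> gets a representative in the support, weighted by the
  \<nu>-mass of the cell.
\<close>
lemma discrete_approximation:
  fixes \<nu> :: "'a::second_countable_topology measure" and f :: "nat \<Rightarrow> 'a \<Rightarrow> real"
  assumes \<nu>: "prob_space \<nu>" "sets \<nu> = sets borel"
    and f: "\<And>i. i < k \<Longrightarrow> continuous_on UNIV (f i)" "\<And>i. i < k \<Longrightarrow> bounded (range (f i))"
    and h: "0 < h"
  obtains X p where "finite X" "X \<subseteq> msupport \<nu>" "\<And>x. x \<in> X \<Longrightarrow> 0 \<le> p x" "sum p X = 1"
    "\<And>i. i < k \<Longrightarrow> \<bar>(\<Sum>x\<in>X. p x * f i x) - integral\<^sup>L \<nu> (f i)\<bar> \<le> h"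
proof -
  obtain B where B: "\<And>i y. i < k \<Longrightarrow> \<bar>f i y\<bar> \<le> B"
    using uniform_bound_finite_family[of k f, OF f(2)] by metis
  have f_meas: "f i \<in> borel_measurable \<nu>" if "i < k" for i
    using borel_measurable_continuous_onI[OF f(1)[OF that]] \<nu>(2) by (simp cong: measurable_cong_sets)
  define cell where "cell y = (\<lambda>i\<in>{..<k}. \<lfloor>f i y / h\<rfloor>)" for y
  define A where "A x = {y. cell y = cell x}" for x
  have cell_eq: "cell y = cell x \<longleftrightarrow> (\<forall>i<k. \<lfloor>f i y / h\<rfloor> = \<lfloor>f i x / h\<rfloor>)" for x y
    by (auto simp: cell_def fun_eq_iff restrict_def)
  have "\<lfloor>f i y / h\<rfloor> \<in> {\<lfloor>- B / h\<rfloor>..\<lfloor>B / h\<rfloor>}" if "i < k" for i y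
  proof -
    have "- B \<le> f i y" "f i y \<le> B"
      using B[OF that, of y] by auto
    then have "- B / h \<le> f i y / h" "f i y / h \<le> B / h"
      using h divide_right_mono[of "- B" "f i y" h] divide_right_mono[of "f i y" B h] by auto
    then show ?thesis
      by (auto intro: floor_mono)
  qed
  then have "cell ` msupport \<nu> \<subseteq> (\<Pi>\<^sub>E i\<in>{..<k}. {\<lfloor>- B / h\<rfloor>..\<lfloor>B / h\<rfloor>})"
    by (auto simp: cell_def split: if_splits)
  then have "finite (cell ` msupport \<nu>)"
    by (rule finite_subset) (intro finite_PiE; simp)
  then obtain X where X: "X \<subseteq> msupport \<nu>" "finite X"
    and cover: "\<And>y. y \<in> msupport \<nu> \<Longrightarrow> (\<Sum>x\<in>X. indicator (A x) y) = (1::real)"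
    unfolding A_def by (rule exists_representatives) blast
  have AE_cover: "AE y in \<nu>. (\<Sum>x\<in>X. indicator (A x) y) = (1::real)"
    using AE_in_msupport[OF \<nu>(2)] by eventually_elim (rule cover)
  have A_sets: "A x \<in> sets \<nu>" for x
  proof -
    note [measurable] = f_meas
    have "A x = {y \<in> space \<nu>. \<forall>i\<in>{..<k}. \<lfloor>f i y / h\<rfloor> = \<lfloor>f i x / h\<rfloor>}"
      using sets_eq_imp_space_eq[OF \<nu>(2)] by (auto simp: A_def cell_eq)
    also have "\<dots> \<in> sets \<nu>"
      by (intro sets.sets_Collect_finite_All) auto
    finally show ?thesis .
  qed
  have close: "\<bar>f i x - f i y\<bar> \<le> h" if "i < k" "y \<in> A x" for i x y
  proof -
    have "\<lfloor>f i x / h\<rfloor> = \<lfloor>f i y / h\<rfloor>"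
      using that by (simp add: A_def cell_eq)
    then have "\<bar>f i x / h - f i y / h\<bar> < 1"
      by linarith
    then show ?thesis
      using h by (simp add: abs_divide diff_divide_distrib[symmetric] divide_less_eq)
  qed
  show ?thesis
  proof (rule that[of X "\<lambda>x. measure \<nu> (A x)"])
    show "sum (\<lambda>x. measure \<nu> (A x)) X = 1"
      using \<nu>(1) X(2) A_sets AE_cover by (rule sum_measure_eq_1_if_AE_partition)
    show "\<bar>(\<Sum>x\<in>X. measure \<nu> (A x) * f i x) - integral\<^sup>L \<nu> (f i)\<bar> \<le> h" if "i < k" for i
      using \<nu>(1) X(2) A_sets AE_cover f_meas[OF that] B[OF that] close[OF that]
      by (rule integral_approx_by_AE_partition)
  qed (use X in auto)
qed

section \<open>Matching stick-breaking weights to a discrete measure\<close>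

lemma subset_sum_between:
  fixes w :: "'j \<Rightarrow> real"
  assumes "finite J" "\<And>j. j \<in> J \<Longrightarrow> 0 \<le> w j \<and> w j \<le> \<delta>" "0 \<le> \<delta>" "0 \<le> t" "t \<le> sum w J"
  shows "\<exists>J0 \<subseteq> J. t - \<delta> \<le> sum w J0 \<and> sum w J0 \<le> t"
  using assms
proof (induction J rule: finite_induct)
  case empty
  then show ?case by auto
next
  case (insert a F)
  show ?case
  proof (cases "t \<le> sum w F")
    case True
    then obtain J0 where "J0 \<subseteq> F" "t - \<delta> \<le> sum w J0 \<and> sum w J0 \<le> t"
      using insert by auto
    then show ?thesis
      by blast
  next
    case False
    then show ?thesis
      using insert.prems(1)[of a] insert.prems(4) insert.hyps by (intro exI[of _ F]) auto
  qed
qed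

text \<open>
  Greedily give the first target p l0 a set of weights whose sum undershoots it by at most \<delta>,
  and recurse on the remaining weights and targets.
\<close>
lemma exists_assignment_approximating_targets:
  fixes p :: "'l \<Rightarrow> real" and w :: "'j \<Rightarrow> real"
  assumes "finite L" "L \<noteq> {}" "finite J" "\<And>j. j \<in> J \<Longrightarrow> 0 \<le> w j \<and> w j \<le> \<delta>" "0 \<le> \<delta>"
    and "\<And>l. l \<in> L \<Longrightarrow> 0 \<le> p l"
  shows "\<exists>g. g \<in> J \<rightarrow> L \<and>
    (\<Sum>l\<in>L. \<bar>(\<Sum>j\<in>{j\<in>J. g j = l}. w j) - p l\<bar>) \<le> 2 * real (card L) * \<delta> + \<bar>sum w J - sum p L\<bar>"
  using assms(1,2,3,4,6)
proof (induction L arbitrary: J rule: finite_ne_induct)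
  case (singleton l)
  have "{j \<in> J. l = l} = J"
    by auto
  then show ?case
    using assms(5) by (intro exI[of _ "\<lambda>_. l"]) auto
next
  case (insert l0 L)
  show ?case
  proof (cases "p l0 \<le> sum w J")
    case True
    obtain J0 where J0: "J0 \<subseteq> J" "p l0 - \<delta> \<le> sum w J0" "sum w J0 \<le> p l0"
      using subset_sum_between[of J w \<delta> "p l0"] insert.prems True assms(5) by auto
    obtain g' where g': "g' \<in> J - J0 \<rightarrow> L"
      "(\<Sum>l\<in>L. \<bar>(\<Sum>j\<in>{j\<in>J - J0. g' j = l}. w j) - p l\<bar>) \<le> 2 * real (card L) * \<delta> + \<bar>sum w (J - J0) - sum p L\<bar>"
      using insert.IH[of "J - J0"] insert.prems by auto
    define g where "g j = (if j \<in> J0 then l0 else g' j)" for j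
    have "{j\<in>J. g j = l} = {j\<in>J - J0. g' j = l}" if "l \<in> L" for l
      using that insert.hyps g'(1) by (auto simp: g_def)
    moreover have "{j\<in>J. g j = l0} = J0"
      using insert.hyps g'(1) J0(1) by (auto simp: g_def)
    ultimately have "(\<Sum>l\<in>insert l0 L. \<bar>(\<Sum>j\<in>{j\<in>J. g j = l}. w j) - p l\<bar>)
        = \<bar>sum w J0 - p l0\<bar> + (\<Sum>l\<in>L. \<bar>(\<Sum>j\<in>{j\<in>J - J0. g' j = l}. w j) - p l\<bar>)"
      using insert.hyps by simp
    also have "\<dots> \<le> 2 * real (card (insert l0 L)) * \<delta> + \<bar>sum w J - sum p (insert l0 L)\<bar>"
      using g'(2) J0 insert.hyps insert.prems(1) assms(5)
      by (simp add: sum_diff finite_subset algebra_simps abs_if split: if_splits)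
    finally show ?thesis
      using g'(1) by (intro exI[of _ g]) (auto simp: g_def Pi_iff)
  next
    case False
    have "l0 \<noteq> l" if "l \<in> L" for l
      using that insert.hyps by auto
    then have "(\<Sum>l\<in>L. \<bar>(\<Sum>j\<in>{j\<in>J. l0 = l}. w j) - p l\<bar>) = sum p L"
      using insert.prems(3) by (intro sum.cong) auto
    then have "(\<Sum>l\<in>insert l0 L. \<bar>(\<Sum>j\<in>{j\<in>J. l0 = l}. w j) - p l\<bar>) = \<bar>sum w J - p l0\<bar> + sum p L"
      using insert.hyps by simp
    also have "\<dots> \<le> 2 * real (card (insert l0 L)) * \<delta> + \<bar>sum w J - sum p (insert l0 L)\<bar>"
      using insert.hyps insert.prems False assms(5) sum_nonneg[of L p]
      by (auto simp: abs_if)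
    finally show ?thesis
      by (intro exI[of _ "\<lambda>_. l0"]) auto
  qed
qed

lemma abs_suminf_weighted_minus_prefix_le:
  fixes w F :: "nat \<Rightarrow> real"
  assumes w: "\<And>j. 0 \<le> w j" "summable w" "suminf w \<le> 1"
    and F: "\<And>j. \<bar>F j\<bar> \<le> B" and c: "\<bar>c\<bar> \<le> B"
  shows "\<bar>(\<Sum>j. w j * F j) + (1 - suminf w) * c - (\<Sum>j<N. w j * F j)\<bar> \<le> B * (1 - (\<Sum>j<N. w j))"
proof -
  have wF: "\<bar>w j * F j\<bar> \<le> w j * B" for j
    using mult_left_mono[OF F[of j] w(1)[of j]] w(1)[of j] by (simp add: abs_mult)
  have tail_summable: "summable (\<lambda>j. w (j + N))"
    using w(2) by (rule summable_ignore_initial_segment)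
  have "summable (\<lambda>j. w j * F j)"
    by (rule summable_comparison_test'[where N=0, OF summable_mult2[OF w(2)]]) (use wF in simp)
  then have "(\<Sum>j. w j * F j) - (\<Sum>j<N. w j * F j) = (\<Sum>j. w (j + N) * F (j + N))"
    by (simp add: suminf_split_initial_segment[of _ N])
  also have "\<bar>\<dots>\<bar> \<le> (\<Sum>j. w (j + N) * B)"
    using wF summable_mult2[OF tail_summable] by (rule norm_suminf_le[where 'a=real, unfolded real_norm_def])
  also have "\<dots> = (suminf w - (\<Sum>j<N. w j)) * B"
    using suminf_mult2[OF tail_summable, of B] suminf_split_initial_segment[OF w(2), of N] by simp
  finally have prefix: "\<bar>(\<Sum>j. w j * F j) - (\<Sum>j<N. w j * F j)\<bar> \<le> (suminf w - (\<Sum>j<N. w j)) * B" .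
  have rest: "\<bar>(1 - suminf w) * c\<bar> \<le> (1 - suminf w) * B"
    using w(3) c by (simp add: abs_mult mult_left_mono)
  have "(suminf w - (\<Sum>j<N. w j)) * B + (1 - suminf w) * B = B * (1 - (\<Sum>j<N. w j))"
    by (simp add: algebra_simps)
  then show ?thesis
    using abs_triangle_ineq[of "(\<Sum>j. w j * F j) - (\<Sum>j<N. w j * F j)" "(1 - suminf w) * c"] prefix rest
    by linarith
qed

definition matching_weights ::
    "nat \<Rightarrow> (nat \<Rightarrow> 'a) \<Rightarrow> 'a set \<Rightarrow> ('a \<Rightarrow> real) \<Rightarrow> real \<Rightarrow> real \<Rightarrow> (nat \<Rightarrow> real) set" where
  "matching_weights N g X p \<delta> \<epsilon> = {w. 1 - (\<Sum>j<N. w j) \<le> \<delta> \<and>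
     (\<Sum>x\<in>X. \<bar>(\<Sum>j\<in>{j\<in>{..<N}. g j = x}. w j) - p x\<bar>) \<le> \<epsilon>}"

lemma sets_matching_weights: "matching_weights N g X p \<delta> \<epsilon> \<in> sets (PiM UNIV (\<lambda>_. borel))"
proof -
  have [measurable]: "(\<lambda>w::nat\<Rightarrow>real. w j) \<in> borel_measurable (PiM UNIV (\<lambda>_. borel))" for j
    by (rule measurable_component_singleton) simp
  have "matching_weights N g X p \<delta> \<epsilon>
      = {w \<in> space (PiM UNIV (\<lambda>_. borel)). 1 - (\<Sum>j<N. w j) \<le> \<delta> \<and>
          (\<Sum>x\<in>X. \<bar>(\<Sum>j\<in>{j\<in>{..<N}. g j = x}. w j) - p x\<bar>) \<le> \<epsilon>}"
    by (auto simp: matching_weights_def space_PiM)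
  also have "\<dots> \<in> sets (PiM UNIV (\<lambda>_. borel))"
    by measurable
  finally show ?thesis .
qed

lemma integral_ssp_measure_near_discrete:
  assumes \<mu>0: "prob_space \<mu>0" and w: "\<And>j. 0 \<le> w j" "summable w" "suminf w \<le> 1"
    and \<xi>: "\<And>j. \<xi> j \<in> space \<mu>0" and f: "f \<in> borel_measurable \<mu>0" "\<And>x. \<bar>f x\<bar> \<le> B"
    and X: "finite X" "\<And>j. j < N \<Longrightarrow> g j \<in> X"
    and matching: "w \<in> matching_weights N g X p \<delta> \<epsilon>"
    and near: "\<And>j. j < N \<Longrightarrow> \<bar>f (\<xi> j) - f (g j)\<bar> \<le> \<eta>" and "0 \<le> \<eta>"
  shows "\<bar>integral\<^sup>L (ssp_measure \<mu>0 w \<xi>) f - (\<Sum>x\<in>X. p x * f x)\<bar> \<le> B * \<delta> + \<eta> + B * \<epsilon>"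
proof -
  have tail: "1 - (\<Sum>j<N. w j) \<le> \<delta>"
    and assign: "(\<Sum>x\<in>X. \<bar>(\<Sum>j\<in>{j\<in>{..<N}. g j = x}. w j) - p x\<bar>) \<le> \<epsilon>"
    using matching by (simp_all add: matching_weights_def)
  interpret prob_space \<mu>0 by fact
  have "0 \<le> B"
    using order_trans[OF abs_ge_zero f(2)] .
  have "\<bar>integral\<^sup>L \<mu>0 f\<bar> \<le> integral\<^sup>L \<mu>0 (\<lambda>x. \<bar>f x\<bar>)"
    by (rule integral_abs_bound)
  also have "\<dots> \<le> integral\<^sup>L \<mu>0 (\<lambda>_. B)"
    using f \<open>0 \<le> B\<close> by (intro integral_mono integrable_const_bound[where B=B]) auto
  finally have int_f: "\<bar>integral\<^sup>L \<mu>0 f\<bar> \<le> B"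
    by (simp add: prob_space)
  have sum_w: "(\<Sum>j<N. w j) \<le> 1"
    using sum_le_suminf[OF w(2), of "{..<N}"] w by auto
  have "integral\<^sup>L (ssp_measure \<mu>0 w \<xi>) f = (\<Sum>j. w j * f (\<xi> j)) + (1 - suminf w) * integral\<^sup>L \<mu>0 f"
    using \<mu>0 w \<xi> f by (intro integral_ssp_measure) auto
  then have "\<bar>integral\<^sup>L (ssp_measure \<mu>0 w \<xi>) f - (\<Sum>j<N. w j * f (\<xi> j))\<bar> \<le> B * (1 - (\<Sum>j<N. w j))"
    using w f(2) int_f by (simp add: abs_suminf_weighted_minus_prefix_le)
  also have "\<dots> \<le> B * \<delta>"
    using tail \<open>0 \<le> B\<close> by (simp add: mult_left_mono)
  finally have T1: "\<bar>integral\<^sup>L (ssp_measure \<mu>0 w \<xi>) f - (\<Sum>j<N. w j * f (\<xi> j))\<bar> \<le> B * \<delta>" .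
  have "(\<Sum>j<N. w j * f (\<xi> j)) - (\<Sum>j<N. w j * f (g j)) = (\<Sum>j<N. w j * (f (\<xi> j) - f (g j)))"
    by (simp add: sum_subtractf right_diff_distrib)
  then have "\<bar>(\<Sum>j<N. w j * f (\<xi> j)) - (\<Sum>j<N. w j * f (g j))\<bar> \<le> (\<Sum>j<N. \<bar>w j * (f (\<xi> j) - f (g j))\<bar>)"
    by (simp only: sum_abs)
  also have "\<dots> \<le> (\<Sum>j<N. w j * \<eta>)"
    using near w(1) by (intro sum_mono) (simp add: abs_mult mult_left_mono)
  also have "\<dots> = (\<Sum>j<N. w j) * \<eta>"
    by (simp add: sum_distrib_right)
  also have "\<dots> \<le> \<eta>"
    using sum_w \<open>0 \<le> \<eta>\<close> w(1) by (intro mult_left_le_one_le sum_nonneg) auto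
  finally have T2: "\<bar>(\<Sum>j<N. w j * f (\<xi> j)) - (\<Sum>j<N. w j * f (g j))\<bar> \<le> \<eta>" .
  have "(\<Sum>j<N. w j * f (g j)) = (\<Sum>x\<in>X. \<Sum>j\<in>{j\<in>{..<N}. g j = x}. w j * f (g j))"
    using X by (intro sum.group[symmetric]) auto
  also have "\<dots> = (\<Sum>x\<in>X. (\<Sum>j\<in>{j\<in>{..<N}. g j = x}. w j) * f x)"
    by (simp add: sum_distrib_right)
  finally have T3: "(\<Sum>j<N. w j * f (g j)) = (\<Sum>x\<in>X. (\<Sum>j\<in>{j\<in>{..<N}. g j = x}. w j) * f x)" .
  have "(\<Sum>x\<in>X. (\<Sum>j\<in>{j\<in>{..<N}. g j = x}. w j) * f x) - (\<Sum>x\<in>X. p x * f x)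
      = (\<Sum>x\<in>X. ((\<Sum>j\<in>{j\<in>{..<N}. g j = x}. w j) - p x) * f x)"
    by (simp add: sum_subtractf left_diff_distrib)
  also have "\<bar>\<dots>\<bar> \<le> (\<Sum>x\<in>X. \<bar>((\<Sum>j\<in>{j\<in>{..<N}. g j = x}. w j) - p x) * f x\<bar>)"
    by (rule sum_abs)
  also have "\<dots> \<le> (\<Sum>x\<in>X. \<bar>(\<Sum>j\<in>{j\<in>{..<N}. g j = x}. w j) - p x\<bar> * B)"
    using f(2) by (intro sum_mono) (simp add: abs_mult mult_left_mono)
  also have "\<dots> = B * (\<Sum>x\<in>X. \<bar>(\<Sum>j\<in>{j\<in>{..<N}. g j = x}. w j) - p x\<bar>)"
    by (simp add: sum_distrib_left mult.commute)
  also have "\<dots> \<le> B * \<epsilon>"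
    using assign \<open>0 \<le> B\<close> by (rule mult_left_mono)
  finally show ?thesis
    using T1 T2 T3 by linarith
qed

lemma exists_matching_assignment_if_sticks_in_interval:
  assumes v01: "\<And>i. v i \<omega> \<in> {0..1}" and v_in: "\<And>j. j < N \<Longrightarrow> v j \<omega> \<in> {\<eta>..\<delta>}"
    and N: "(1 - \<eta>) ^ N \<le> \<delta>" and "0 \<le> \<delta>"
    and X: "finite X" "X \<noteq> {}" and p: "\<And>x. x \<in> X \<Longrightarrow> 0 \<le> p x" "sum p X = 1"
  shows "\<exists>g\<in>(\<Pi>\<^sub>E j\<in>{..<N}. X). (\<lambda>j. sb_weight v j \<omega>) \<in> matching_weights N g X p \<delta> ((2 * real (card X) + 1) * \<delta>)"
proof -
  have "(\<Prod>i<N. 1 - v i \<omega>) \<le> (\<Prod>i<N. 1 - \<eta>)"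
    using v_in v01 by (intro prod_mono) auto
  then have rest: "(\<Prod>i<N. 1 - v i \<omega>) \<le> \<delta>"
    using N by simp
  have w_bound: "0 \<le> sb_weight v j \<omega> \<and> sb_weight v j \<omega> \<le> \<delta>" if "j \<in> {..<N}" for j
    using sb_weight_nonneg[where v=v and \<omega>=\<omega>, OF v01] sb_weight_le[where v=v and \<omega>=\<omega>, OF v01, of j]
      v_in[of j] that by auto
  have "\<exists>g. g \<in> {..<N} \<rightarrow> X \<and>
      (\<Sum>x\<in>X. \<bar>(\<Sum>j\<in>{j\<in>{..<N}. g j = x}. sb_weight v j \<omega>) - p x\<bar>)
        \<le> 2 * real (card X) * \<delta> + \<bar>(\<Sum>j<N. sb_weight v j \<omega>) - sum p X\<bar>"
    by (rule exists_assignment_approximating_targets) (use X w_bound \<open>0 \<le> \<delta>\<close> p(1) in auto)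
  then obtain g where g: "g \<in> {..<N} \<rightarrow> X"
    "(\<Sum>x\<in>X. \<bar>(\<Sum>j\<in>{j\<in>{..<N}. g j = x}. sb_weight v j \<omega>) - p x\<bar>) \<le> (2 * real (card X) + 1) * \<delta>"
    using rest prod_one_minus_nonneg[where v=v and \<omega>=\<omega> and n=N, OF v01]
    by (auto simp: sum_sb_weight p(2) algebra_simps)
  have "{j\<in>{..<N}. restrict g {..<N} j = x} = {j\<in>{..<N}. g j = x}" for x
    by auto
  then show ?thesis
    using g rest by (intro bexI[of _ "restrict g {..<N}"]) (auto simp: matching_weights_def sum_sb_weight)
qed

lemma obtain_pos_less_1_mult_le:
  fixes c e :: real
  assumes "0 < e" "0 \<le> c"
  obtains \<delta> where "0 < \<delta>" "\<delta> < 1" "c * \<delta> \<le> e"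
proof
  define \<delta> where "\<delta> = min (1 / 2) (e / (c + 1))"
  show "0 < \<delta>" "\<delta> < 1"
    using assms by (auto simp: \<delta>_def)
  have "\<delta> \<le> e / (c + 1)"
    by (simp add: \<delta>_def)
  then have "(c + 1) * \<delta> \<le> e"
    using assms by (simp add: pos_le_divide_eq mult.commute)
  moreover have "c * \<delta> \<le> (c + 1) * \<delta>"
    using \<open>0 < \<delta>\<close> by simp
  ultimately show "c * \<delta> \<le> e"
    by linarith
qed

section \<open>Exchangeable stick-breaking processes\<close>

locale exchangeable_stick_breaking =
  fixes M :: "'w measure" and \<mu>0 :: "'a::polish_space measure"
    and v :: "nat \<Rightarrow> 'w \<Rightarrow> real" and \<xi> :: "nat \<Rightarrow> 'w \<Rightarrow> 'a"
  assumes prob_space_M: "prob_space M"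
    and prob_space_\<mu>0: "prob_space \<mu>0" and sets_\<mu>0: "sets \<mu>0 = sets borel"
    and exchangeable: "exchangeable M v"
    and v_01: "\<And>i \<omega>. \<omega> \<in> space M \<Longrightarrow> v i \<omega> \<in> {0..1}"
    and indep_atoms: "prob_space.indep_vars M (\<lambda>_. \<mu>0) \<xi> UNIV"
    and distr_atoms: "\<And>i. distr M \<mu>0 (\<xi> i) = \<mu>0"
    and indep_weights_atoms: "indep_rv M
           (PiM UNIV (\<lambda>_. borel)) (\<lambda>\<omega> j. sb_weight v j \<omega>)
           (PiM UNIV (\<lambda>_. \<mu>0)) (\<lambda>\<omega> j. \<xi> j \<omega>)"
begin

sublocale prob_space M
  by (rule prob_space_M)

abbreviation random_measure :: "'w \<Rightarrow> 'a measure" where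
  "random_measure \<omega> \<equiv> ssp_measure \<mu>0 (\<lambda>j. sb_weight v j \<omega>) (\<lambda>j. \<xi> j \<omega>)"

lemma space_\<mu>0: "space \<mu>0 = UNIV"
  using sets_eq_imp_space_eq[OF sets_\<mu>0] by simp

lemma measurable_atom: "\<xi> i \<in> measurable M \<mu>0"
  using indep_atoms by (simp add: indep_vars_def2)

lemma emeasure_atom_preimage: "A \<in> sets \<mu>0 \<Longrightarrow> emeasure M (\<xi> i -` A \<inter> space M) = emeasure \<mu>0 A"
  using emeasure_distr[OF measurable_atom, of A i] distr_atoms[of i] by simp

lemma AE_msupport_random_measure: "AE \<omega> in M. msupport (random_measure \<omega>) \<subseteq> msupport \<mu>0"
proof -
  have "AE \<omega> in M. \<xi> j \<omega> \<in> msupport \<mu>0" for j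
    by (rule AE_distrD[OF measurable_atom]) (unfold distr_atoms, rule AE_in_msupport[OF sets_\<mu>0])
  then have "AE \<omega> in M. \<forall>j. \<xi> j \<omega> \<in> msupport \<mu>0"
    by (simp add: AE_all_countable)
  then show ?thesis
    by eventually_elim (simp add: msupport_ssp_measure_subset sets_\<mu>0)
qed

lemma prob_atoms_in_pos:
  assumes "\<And>j. j < N \<Longrightarrow> U j \<in> sets \<mu>0" and "\<And>j. j < N \<Longrightarrow> emeasure \<mu>0 (U j) > 0"
  shows "prob {\<omega> \<in> space M. \<forall>j<N. \<xi> j \<omega> \<in> U j} > 0"
proof (cases "N = 0")
  case True
  then show ?thesis
    by (simp add: prob_space)
next
  case False
  then have "{\<omega> \<in> space M. \<forall>j<N. \<xi> j \<omega> \<in> U j} = (\<Inter>j\<in>{..<N}. \<xi> j -` U j \<inter> space M)"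
    by auto
  also have "prob \<dots> = (\<Prod>j<N. prob (\<xi> j -` U j \<inter> space M))"
    using False assms(1) by (intro indep_varsD[OF indep_atoms]) auto
  also have "\<dots> > 0"
  proof (rule prod_pos)
    fix j assume "j \<in> {..<N}"
    then have "emeasure M (\<xi> j -` U j \<inter> space M) > 0"
      using assms by (simp add: emeasure_atom_preimage)
    then show "prob (\<xi> j -` U j \<inter> space M) > 0"
      by (simp add: emeasure_eq_measure)
  qed
  finally show ?thesis .
qed

lemma prob_weights_atoms_indep:
  assumes "BW \<in> sets (PiM UNIV (\<lambda>_. borel))" and "BX \<in> sets (PiM UNIV (\<lambda>_. \<mu>0))"
  shows "prob ((\<lambda>\<omega> j. sb_weight v j \<omega>) -` BW \<inter> space M \<inter> ((\<lambda>\<omega> j. \<xi> j \<omega>) -` BX \<inter> space M))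
    = prob ((\<lambda>\<omega> j. sb_weight v j \<omega>) -` BW \<inter> space M) * prob ((\<lambda>\<omega> j. \<xi> j \<omega>) -` BX \<inter> space M)"
  using indep_weights_atoms assms unfolding indep_rv_def
  by (intro indep_setD) (auto intro: sigma_sets.Basic)

lemma sb_weights_measurable: "(\<lambda>\<omega> j. sb_weight v j \<omega>) \<in> measurable M (PiM UNIV (\<lambda>_. borel))"
  using indep_weights_atoms by (simp add: indep_rv_def)

lemma integral_random_measure:
  fixes f :: "'a \<Rightarrow> real"
  assumes "\<omega> \<in> space M" and f: "f \<in> borel_measurable borel" "\<And>x. \<bar>f x\<bar> \<le> B"
  shows "integral\<^sup>L (random_measure \<omega>) f
    = (\<Sum>j. sb_weight v j \<omega> * f (\<xi> j \<omega>)) + (1 - (\<Sum>j. sb_weight v j \<omega>)) * integral\<^sup>L \<mu>0 f"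
  using assms v_01 sets_\<mu>0
  by (intro integral_ssp_measure prob_space_\<mu>0)
    (auto simp: space_\<mu>0 sb_weight_nonneg summable_sb_weight suminf_sb_weight_le_1 cong: measurable_cong_sets)

lemma measurable_integral_random_measure:
  fixes f :: "'a \<Rightarrow> real"
  assumes f: "f \<in> borel_measurable borel" "\<And>x. \<bar>f x\<bar> \<le> B"
  shows "(\<lambda>\<omega>. integral\<^sup>L (random_measure \<omega>) f) \<in> borel_measurable M"
proof -
  note [measurable] = f(1) exchangeable_measurable[OF exchangeable]
  have [measurable]: "\<xi> j \<in> borel_measurable M" for j
    using measurable_atom[of j] sets_\<mu>0 by (simp cong: measurable_cong_sets)
  have "(\<lambda>\<omega>. (\<Sum>j. sb_weight v j \<omega> * f (\<xi> j \<omega>)) + (1 - (\<Sum>j. sb_weight v j \<omega>)) * integral\<^sup>L \<mu>0 f)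
      \<in> borel_measurable M"
    unfolding sb_weight_def by measurable
  then show ?thesis
    using integral_random_measure[OF _ f] by (subst measurable_cong) auto
qed

text \<open>
  With positive probability the first N sticks all lie in [\<delta>/2, \<delta>], and every such outcome is
  matched by one of the finitely many assignments of the first N sticks to X.
\<close>
lemma obtain_assignment_with_matching_weights:
  assumes interval_pos: "\<And>\<eta> \<delta>. 0 < \<eta> \<Longrightarrow> \<eta> < \<delta> \<Longrightarrow> \<delta> < 1 \<Longrightarrow> emeasure M (v 0 -` {\<eta>..\<delta>} \<inter> space M) > 0"
    and X: "finite X" "X \<noteq> {}" and p: "\<And>x. x \<in> X \<Longrightarrow> 0 \<le> p x" "sum p X = 1"
    and \<delta>: "0 < \<delta>" "\<delta> < 1"
  obtains N g where "\<And>j. j < N \<Longrightarrow> g j \<in> X"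
    "prob ((\<lambda>\<omega> j. sb_weight v j \<omega>) -` matching_weights N g X p \<delta> ((2 * real (card X) + 1) * \<delta>) \<inter> space M) > 0"
proof -
  define \<eta> where "\<eta> = \<delta> / 2"
  have \<eta>: "0 < \<eta>" "\<eta> < \<delta>"
    using \<delta> by (auto simp: \<eta>_def)
  obtain N where N: "(1 - \<eta>) ^ N < \<delta>"
  proof -
    have "(\<lambda>n. (1 - \<eta>) ^ n) \<longlonglongrightarrow> 0"
      using \<eta> \<delta> by (intro LIMSEQ_power_zero) auto
    then have "eventually (\<lambda>n. (1 - \<eta>) ^ n < \<delta>) sequentially"
      using \<delta>(1) by (rule order_tendstoD(2))
    then show ?thesis
      using that by (auto simp: eventually_sequentially)
  qed
  define good where "good g = (\<lambda>\<omega> j. sb_weight v j \<omega>) -` matching_weights N g X p \<delta> ((2 * real (card X) + 1) * \<delta>) \<inter> space M" for g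
  have good_sets: "good g \<in> sets M" for g
    unfolding good_def by (rule measurable_sets[OF sb_weights_measurable sets_matching_weights])
  define V where "V = {\<omega> \<in> space M. \<forall>j<N. v j \<omega> \<in> {\<eta>..\<delta>}}"
  have V_pos: "emeasure M V > 0"
    unfolding V_def using interval_pos \<eta> \<delta>
    by (intro exchangeable_emeasure_all_in_pos[OF prob_space_M exchangeable]) auto
  have V_sub: "V \<subseteq> (\<Union>g\<in>(\<Pi>\<^sub>E j\<in>{..<N}. X). good g)"
  proof
    fix \<omega> assume "\<omega> \<in> V"
    then have "\<omega> \<in> space M" "\<And>j. j < N \<Longrightarrow> v j \<omega> \<in> {\<eta>..\<delta>}"
      by (auto simp: V_def)
    moreover have "\<exists>g\<in>(\<Pi>\<^sub>E j\<in>{..<N}. X). (\<lambda>j. sb_weight v j \<omega>) \<in> matching_weights N g X p \<delta> ((2 * real (card X) + 1) * \<delta>)"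
      using calculation v_01 N \<delta> X p by (intro exists_matching_assignment_if_sticks_in_interval) auto
    ultimately show "\<omega> \<in> (\<Union>g\<in>(\<Pi>\<^sub>E j\<in>{..<N}. X). good g)"
      by (auto simp: good_def)
  qed
  have "\<exists>g\<in>(\<Pi>\<^sub>E j\<in>{..<N}. X). emeasure M (good g) > 0"
  proof (rule ccontr)
    assume "\<not> ?thesis"
    then have "(\<Union>g\<in>(\<Pi>\<^sub>E j\<in>{..<N}. X). good g) \<in> null_sets M"
      using good_sets X(1)
      by (intro null_sets_UN') (auto simp: countable_finite finite_PiE null_sets_def zero_less_iff_neq_zero)
    then have "emeasure M V \<le> 0"
      using emeasure_mono[OF V_sub, where M=M] by (simp add: null_sets_def)
    then show False
      using V_pos by simp
  qed
  then obtain g where "g \<in> (\<Pi>\<^sub>E j\<in>{..<N}. X)" "emeasure M (good g) > 0"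
    by blast
  then show ?thesis
    by (intro that[of N g]) (auto simp: good_def emeasure_eq_measure)
qed

lemma obtain_atoms_near:
  fixes f :: "nat \<Rightarrow> 'a \<Rightarrow> real"
  assumes f: "\<And>i. i < k \<Longrightarrow> continuous_on UNIV (f i)"
    and g: "\<And>j. j < N \<Longrightarrow> g j \<in> msupport \<mu>0" and "0 < r"
  obtains BX where "BX \<in> sets (PiM UNIV (\<lambda>_. \<mu>0))" "prob ((\<lambda>\<omega> j. \<xi> j \<omega>) -` BX \<inter> space M) > 0"
    "\<And>\<omega> i j. \<omega> \<in> (\<lambda>\<omega> j. \<xi> j \<omega>) -` BX \<Longrightarrow> i < k \<Longrightarrow> j < N \<Longrightarrow> \<bar>f i (\<xi> j \<omega>) - f i (g j)\<bar> < r"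
proof
  define U where "U x = (\<Inter>i<k. f i -` ball (f i x) r)" for x
  have U_near: "y \<in> U x \<longleftrightarrow> (\<forall>i<k. \<bar>f i y - f i x\<bar> < r)" for x y
    by (auto simp: U_def dist_real_def abs_minus_commute)
  have U_open: "open (U x)" for x
    unfolding U_def by (intro open_INT ballI open_vimage open_ball f) auto
  then have U_sets: "U x \<in> sets \<mu>0" for x
    using sets_\<mu>0 by simp
  define BX where "BX = {y :: nat \<Rightarrow> 'a. \<forall>j<N. y j \<in> U (g j)}"
  have "BX = {y \<in> space (PiM UNIV (\<lambda>_. \<mu>0)). \<forall>j\<in>{..<N}. y j \<in> U (g j)}"
    by (auto simp: BX_def space_PiM space_\<mu>0)
  also have "\<dots> \<in> sets (PiM UNIV (\<lambda>_. \<mu>0))"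
  proof (intro sets.sets_Collect_finite_All)
    fix j
    show "{y \<in> space (PiM UNIV (\<lambda>_. \<mu>0)). y j \<in> U (g j)} \<in> sets (PiM UNIV (\<lambda>_. \<mu>0))"
      using measurable_sets[OF measurable_component_singleton[of j UNIV "\<lambda>_. \<mu>0"] U_sets]
      by (simp add: vimage_def Int_def conj_commute)
  qed simp
  finally show "BX \<in> sets (PiM UNIV (\<lambda>_. \<mu>0))" .
  have U_pos: "emeasure \<mu>0 (U (g j)) > 0" if "j < N" for j
    using g[OF that] U_open[of "g j"] U_near[of "g j" "g j"] \<open>0 < r\<close> by (simp add: msupport_def)
  have "(\<lambda>\<omega> j. \<xi> j \<omega>) -` BX \<inter> space M = {\<omega> \<in> space M. \<forall>j<N. \<xi> j \<omega> \<in> U (g j)}"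
    by (auto simp: BX_def)
  then show "prob ((\<lambda>\<omega> j. \<xi> j \<omega>) -` BX \<inter> space M) > 0"
    using U_sets U_pos by (simp add: prob_atoms_in_pos)
  show "\<bar>f i (\<xi> j \<omega>) - f i (g j)\<bar> < r" if "\<omega> \<in> (\<lambda>\<omega> j. \<xi> j \<omega>) -` BX" "i < k" "j < N" for \<omega> i j
    using that by (simp add: BX_def U_near)
qed

lemma sets_random_measure_near:
  fixes f :: "nat \<Rightarrow> 'a \<Rightarrow> real"
  assumes "\<And>i. i < k \<Longrightarrow> f i \<in> borel_measurable borel" "\<And>i y. i < k \<Longrightarrow> \<bar>f i y\<bar> \<le> B"
  shows "{\<omega> \<in> space M. \<forall>i<k. \<bar>integral\<^sup>L (random_measure \<omega>) (f i) - c i\<bar> < e} \<in> sets M"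
proof -
  have [measurable]: "(\<lambda>\<omega>. integral\<^sup>L (random_measure \<omega>) (f i)) \<in> borel_measurable M" if "i < k" for i
    using assms[OF that] by (rule measurable_integral_random_measure)
  have "{\<omega> \<in> space M. \<forall>i<k. \<bar>integral\<^sup>L (random_measure \<omega>) (f i) - c i\<bar> < e}
      = {\<omega> \<in> space M. \<forall>i\<in>{..<k}. i < k \<longrightarrow> \<bar>integral\<^sup>L (random_measure \<omega>) (f i) - c i\<bar> < e}"
    by auto
  also have "\<dots> \<in> sets M"
    by (intro sets.sets_Collect_finite_All) (auto intro: sets.sets_Collect_const)
  finally show ?thesis .
qed

theorem in_law_support_if_msupport_subset:
  assumes interval_pos: "\<And>\<eta> \<delta>. 0 < \<eta> \<Longrightarrow> \<eta> < \<delta> \<Longrightarrow> \<delta> < 1 \<Longrightarrow> emeasure M (v 0 -` {\<eta>..\<delta>} \<inter> space M) > 0"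
    and \<nu>: "prob_space \<nu>" "sets \<nu> = sets borel" and sub: "msupport \<nu> \<subseteq> msupport \<mu>0"
  shows "in_law_support M random_measure \<nu>"
  unfolding in_law_support_def
proof (intro allI impI)
  interpret \<mu>0: prob_space \<mu>0
    by (rule prob_space_\<mu>0)
  fix k and f :: "nat \<Rightarrow> 'a \<Rightarrow> real" and e :: real
  assume f: "\<forall>i<k. continuous_on UNIV (f i) \<and> bounded (range (f i))" and "0 < e"
  then have f_cont: "\<And>i. i < k \<Longrightarrow> continuous_on UNIV (f i)"
    and f_bdd: "\<And>i. i < k \<Longrightarrow> bounded (range (f i))"
    by auto
  have f_meas: "f i \<in> borel_measurable borel" if "i < k" for i
    using f_cont[OF that] by (rule borel_measurable_continuous_onI)
  obtain B where B: "0 \<le> B" "\<And>i y. i < k \<Longrightarrow> \<bar>f i y\<bar> \<le> B"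
    using uniform_bound_finite_family[of k f, OF f_bdd] by metis
  obtain X p where X: "finite X" "X \<subseteq> msupport \<nu>" and p: "\<And>x. x \<in> X \<Longrightarrow> 0 \<le> p x" "sum p X = 1"
    and discrete: "\<And>i. i < k \<Longrightarrow> \<bar>(\<Sum>x\<in>X. p x * f i x) - integral\<^sup>L \<nu> (f i)\<bar> \<le> e / 4"
    by (rule discrete_approximation[OF \<nu>, of k f "e / 4"]) (use f_cont f_bdd \<open>0 < e\<close> in auto)
  have "X \<noteq> {}"
    using p(2) by auto
  obtain \<delta> where \<delta>: "0 < \<delta>" "\<delta> < 1" and \<delta>_small: "(B * (2 * real (card X) + 2)) * \<delta> \<le> e / 4"
    using obtain_pos_less_1_mult_le[of "e / 4" "B * (2 * real (card X) + 2)"] \<open>0 < e\<close> B(1) by auto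
  obtain N g where g: "\<And>j. j < N \<Longrightarrow> g j \<in> X"
    and weights_pos: "prob ((\<lambda>\<omega> j. sb_weight v j \<omega>) -` matching_weights N g X p \<delta> ((2 * real (card X) + 1) * \<delta>) \<inter> space M) > 0"
    using obtain_assignment_with_matching_weights[OF interval_pos X(1) \<open>X \<noteq> {}\<close> p \<delta>] by blast
  obtain BX where BX_sets: "BX \<in> sets (PiM UNIV (\<lambda>_. \<mu>0))"
    and atoms_pos: "prob ((\<lambda>\<omega> j. \<xi> j \<omega>) -` BX \<inter> space M) > 0"
    and near: "\<And>\<omega> i j. \<omega> \<in> (\<lambda>\<omega> j. \<xi> j \<omega>) -` BX \<Longrightarrow> i < k \<Longrightarrow> j < N \<Longrightarrow> \<bar>f i (\<xi> j \<omega>) - f i (g j)\<bar> < e / 4"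
  proof (rule obtain_atoms_near[where k=k and f=f and N=N and g=g and r="e / 4"])
    show "g j \<in> msupport \<mu>0" if "j < N" for j
      using g[OF that] X(2) sub by blast
  qed (use f_cont \<open>0 < e\<close> in auto)
  define E where "E = (\<lambda>\<omega> j. sb_weight v j \<omega>) -` matching_weights N g X p \<delta> ((2 * real (card X) + 1) * \<delta>) \<inter> space M
    \<inter> ((\<lambda>\<omega> j. \<xi> j \<omega>) -` BX \<inter> space M)"
  have "prob E = prob ((\<lambda>\<omega> j. sb_weight v j \<omega>) -` matching_weights N g X p \<delta> ((2 * real (card X) + 1) * \<delta>) \<inter> space M)
    * prob ((\<lambda>\<omega> j. \<xi> j \<omega>) -` BX \<inter> space M)"
    unfolding E_def by (rule prob_weights_atoms_indep[OF sets_matching_weights BX_sets])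
  then have "prob E > 0"
    using weights_pos atoms_pos by simp
  moreover have "E \<subseteq> {\<omega> \<in> space M. \<forall>i<k. \<bar>integral\<^sup>L (random_measure \<omega>) (f i) - integral\<^sup>L \<nu> (f i)\<bar> < e}"
  proof (intro subsetI CollectI conjI allI impI)
    fix \<omega> i assume "\<omega> \<in> E" "i < k"
    then have \<omega>: "\<omega> \<in> space M" "\<omega> \<in> (\<lambda>\<omega> j. \<xi> j \<omega>) -` BX"
      and matching: "(\<lambda>j. sb_weight v j \<omega>) \<in> matching_weights N g X p \<delta> ((2 * real (card X) + 1) * \<delta>)"
      by (auto simp: E_def)
    have v01: "\<And>j. v j \<omega> \<in> {0..1}"
      using v_01 \<omega> by auto
    have "\<bar>integral\<^sup>L (random_measure \<omega>) (f i) - (\<Sum>x\<in>X. p x * f i x)\<bar> \<le> B * \<delta> + e / 4 + B * ((2 * real (card X) + 1) * \<delta>)"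
    proof (rule integral_ssp_measure_near_discrete[OF prob_space_\<mu>0 _ _ _ _ _ _ X(1) g matching])
      show "f i \<in> borel_measurable \<mu>0"
        using f_meas[OF \<open>i < k\<close>] sets_\<mu>0 by (simp cong: measurable_cong_sets)
      show "\<bar>f i (\<xi> j \<omega>) - f i (g j)\<bar> \<le> e / 4" if "j < N" for j
        using near[OF \<omega>(2) \<open>i < k\<close> that] by simp
    qed (use v01 B \<open>i < k\<close> \<open>0 < e\<close> in \<open>auto simp: space_\<mu>0 sb_weight_nonneg summable_sb_weight
      suminf_sb_weight_le_1\<close>)
    moreover have "B * \<delta> + B * ((2 * real (card X) + 1) * \<delta>) = (B * (2 * real (card X) + 2)) * \<delta>"
      by (simp add: algebra_simps)
    ultimately show "\<bar>integral\<^sup>L (random_measure \<omega>) (f i) - integral\<^sup>L \<nu> (f i)\<bar> < e"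
      using discrete[OF \<open>i < k\<close>] \<delta>_small \<open>0 < e\<close> by linarith
  qed (auto simp: E_def)
  moreover have "{\<omega> \<in> space M. \<forall>i<k. \<bar>integral\<^sup>L (random_measure \<omega>) (f i) - integral\<^sup>L \<nu> (f i)\<bar> < e} \<in> sets M"
    using f_meas B(2) by (rule sets_random_measure_near)
  ultimately show "measure M {\<omega> \<in> space M. \<forall>i<k. \<bar>integral\<^sup>L (random_measure \<omega>) (f i) - integral\<^sup>L \<nu> (f i)\<bar> < e} > 0"
    using finite_measure_mono by (meson less_le_trans)
qed

theorem in_law_support_iff_msupport_subset:
  assumes interval_pos: "\<And>\<eta> \<delta>. 0 < \<eta> \<Longrightarrow> \<eta> < \<delta> \<Longrightarrow> \<delta> < 1 \<Longrightarrow> emeasure M (v 0 -` {\<eta>..\<delta>} \<inter> space M) > 0"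
    and \<nu>: "prob_space \<nu>" "sets \<nu> = sets borel"
  shows "in_law_support M random_measure \<nu> \<longleftrightarrow> msupport \<nu> \<subseteq> msupport \<mu>0"
  using msupport_subset_if_in_law_support[OF \<nu> _ closed_msupport AE_msupport_random_measure]
    in_law_support_if_msupport_subset[OF interval_pos \<nu>] sets_\<mu>0
  by auto

end

theorem corollary1:
  fixes M :: "'w measure"
    and \<mu>0 :: "'a::polish_space measure"
    and v :: "nat \<Rightarrow> 'w \<Rightarrow> real"
    and \<xi> :: "nat \<Rightarrow> 'w \<Rightarrow> 'a"
    and a b :: real
  assumes "prob_space M"
    and "prob_space \<mu>0" and "sets \<mu>0 = sets borel" and "diffuse \<mu>0"
    and "a > 0" and "b > 0"
    and "exchangeable M v"
    and "\<And>i \<omega>. \<omega> \<in> space M \<Longrightarrow> v i \<omega> \<in> {0..1}"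
    and "\<And>i. distributed M lborel (v i) (\<lambda>x. ennreal (beta_density a b x))"
    and "prob_space.indep_vars M (\<lambda>_. \<mu>0) \<xi> UNIV"
    and "\<And>i. distr M \<mu>0 (\<xi> i) = \<mu>0"
    and "indep_rv M
           (PiM UNIV (\<lambda>_. borel)) (\<lambda>\<omega> j. sb_weight v j \<omega>)
           (PiM UNIV (\<lambda>_. \<mu>0)) (\<lambda>\<omega> j. \<xi> j \<omega>)"
  shows "(AE \<omega> in M. (\<lambda>j. sb_weight v j \<omega>) sums 1)
    \<and> (\<forall>\<nu>. prob_space \<nu> \<and> sets \<nu> = sets borel \<longrightarrow>
          (in_law_support M (\<lambda>\<omega>. ssp_measure \<mu>0 (\<lambda>j. sb_weight v j \<omega>) (\<lambda>j. \<xi> j \<omega>)) \<nu>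
           \<longleftrightarrow> msupport \<nu> \<subseteq> msupport \<mu>0))"
proof -
  interpret exchangeable_stick_breaking M \<mu>0 v \<xi>
    using assms by (simp add: exchangeable_stick_breaking_def)
  have "AE \<omega> in M. (\<lambda>j. sb_weight v j \<omega>) sums 1"
    using assms(1,7,8) AE_pos_if_beta_distributed[OF assms(9)] by (rule exchangeable_stick_breaking_proper)
  moreover have "in_law_support M random_measure \<nu> \<longleftrightarrow> msupport \<nu> \<subseteq> msupport \<mu>0"
    if "prob_space \<nu>" "sets \<nu> = sets borel" for \<nu>
    using emeasure_pos_if_beta_distributed[OF assms(9) assms(5,6)] that
    by (intro in_law_support_iff_msupport_subset)
  ultimately show ?thesis
    by blast
qed

end
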